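(* Let $\mathbf{k}$ be a field of characteristic zero, let $(C^\bullet,\partial)$ and $(\tilde C^\bullet,\tilde\partial)$ be complexes of finite-dimensional $\mathbf{k}$-vector spaces of the same odd length $d=2r-1$, and let $\Gamma$, $\tilde\Gamma$ be chirality operators on $C^\bullet$ and $\tilde C^\bullet$. Then $\hat\Gamma:=\Gamma\oplus\tilde\Gamma$ is a chirality operator on the direct sum complex $(C^\bullet\oplus\tilde C^\bullet,\partial\oplus\tilde\partial)$ and \[ \rho_{\hat\Gamma}=\mu_{H^\bullet(\partial),H^\bullet(\tilde\partial)}(\rho_\Gamma\otimes\rho_{\tilde\Gamma}), \] where $\operatorname{Det}(H^\bullet(\partial\oplus\tilde\partial))$ is identified with $\operatorname{Det}(H^\bullet(\partial)\oplus H^\bullet(\tilde\partial))$.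
   Context: Determinant lines: $\operatorname{Det}(V)=\Lambda^{\dim V}V$, $\operatorname{Det}(0)=\mathbf{k}$, $L^{-1}=\operatorname{Hom}(L,\mathbf{k})$, $l^{-1}(l)=1$, $\operatorname{Det}(V^\bullet)=\bigotimes_j\operatorname{Det}(V^j)^{(-1)^j}$. Fusion $\mu_{V,W}:\operatorname{Det}(V)\otimes\operatorname{Det}(W)\to\operatorname{Det}(V\oplus W)$ concatenates wedges; $\mu^{-1}_{V,W}$ is the transpose of its inverse on dual lines; for graded spaces of length $d$, $\mu_{V^\bullet,W^\bullet}=(-1)^{\sum_{0\le k<j\le d}\dim V^j\dim W^k}\bigotimes_q\mu_{V^q,W^q}^{(-1)^q}$. The isomorphism $\phi_{C^\bullet}:\operatorname{Det}(C^\bullet)\to\operatorname{Det}(H^\bullet(\partial))$: choose $C^j=B^j\oplus H^j\oplus A^j$ with $B^j\oplus H^j=\operatorname{Ker}\partial\cap C^j$, $B^j=\partial(A^{j-1})=\partial(C^{j-1})$, $A^{-1}=A^d=0$; for nonzero $c_j\in\operatorname{Det}(C^j)$, $a_j\in\operatorname{Det}(A^j)$ ($a_{-1}=1$), $h_j\in\operatorname{Det}(H^j)\cong\operatorname{Det}(H^j(\partial))$ is unique with $c_j=\mu_{B^j,H^j,A^j}(\partial(a_{j-1})\otimes h_j\otimes a_j)$; $\phi_{C^\bullet}(c_0\otimes c_1^{-1}\otimes\cdots\otimes c_d^{(-1)^d})=(-1)^{\mathcal N}h_0\otimes\cdots\otimes h_d^{(-1)^d}$, $\mathcal N=\frac12\sum_j\dim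 A^j(\dim A^j+(-1)^{j+1})$. A chirality operator is an involution $\Gamma$ with $\Gamma(C^j)=C^{d-j}$. For nonzero $c_j\in\operatorname{Det}(C^j)$ ($0\le j\le r-1$), $c_\Gamma=(-1)^{\mathcal R(C^\bullet)}c_0\otimes c_1^{-1}\otimes\cdots\otimes c_{r-1}^{(-1)^{r-1}}\otimes(\Gamma c_{r-1})^{(-1)^r}\otimes\cdots\otimes(\Gamma c_0)^{-1}$ (the entry in degree $k$ has exponent $(-1)^k$), with $\mathcal R(C^\bullet)=\frac12\sum_{j=0}^{r-1}\dim C^j(\dim C^j+(-1)^{r+j})$; it is independent of the $c_j$. The refined torsion is $\rho_\Gamma=\phi_{C^\bullet}(c_\Gamma)$. *)

theory Defs
  imports "Jordan_Normal_Form.Determinant"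
begin

text \<open>
A cochain complex of finite-dimensional k-vector spaces of length d is
C^j = k^(n j) (0 <= j <= d), with differentials given by matrices D j : k^(n j) -> k^(n (j+1))
for j < d (D j = 0 for j >= d by convention, C^(d+1) = 0).
\<close>

definition is_complex :: "(nat \<Rightarrow> nat) \<Rightarrow> (nat \<Rightarrow> 'a::field mat) \<Rightarrow> nat \<Rightarrow> bool" where
  "is_complex n D d \<longleftrightarrow>
     (\<forall>j<d. D j \<in> carrier_mat (n (Suc j)) (n j)) \<and>
     (\<forall>j. Suc j < d \<longrightarrow> D (Suc j) * D j = 0\<^sub>m (n (Suc (Suc j))) (n j))"

definition is_chirality :: "(nat \<Rightarrow> nat) \<Rightarrow> (nat \<Rightarrow> 'a::field mat) \<Rightarrow> nat \<Rightarrow> bool" where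
  "is_chirality n Gam d \<longleftrightarrow>
     (\<forall>j\<le>d. Gam j \<in> carrier_mat (n (d - j)) (n j) \<and> Gam (d - j) * Gam j = 1\<^sub>m (n j))"

definition cocyc :: "(nat \<Rightarrow> nat) \<Rightarrow> (nat \<Rightarrow> 'a::field mat) \<Rightarrow> nat \<Rightarrow> nat \<Rightarrow> 'a vec set" where
  "cocyc n D d j = {x \<in> carrier_vec (n j). j \<ge> d \<or> D j *\<^sub>v x = 0\<^sub>v (n (Suc j))}"

definition cobound :: "(nat \<Rightarrow> nat) \<Rightarrow> (nat \<Rightarrow> 'a::field mat) \<Rightarrow> nat \<Rightarrow> 'a vec set" where
  "cobound n D j = (if j = 0 then {0\<^sub>v (n 0)}
                    else {D (j - 1) *\<^sub>v y | y. y \<in> carrier_vec (n (j - 1))})"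

text \<open>
Elements of the determinant line Det(H^\<bullet>(\<partial>)) are represented by pairs (s, eta), where
eta j is a list of cocycles whose classes form an ordered basis of H^j(\<partial>) = Z^j/B^j;
the pair stands for  s * [eta 0] \<otimes> [eta 1]^(-1) \<otimes> ... \<otimes> [eta d]^((-1)^d),
[eta j] being the wedge product of the classes.
\<close>

definition cohom_basis :: "(nat \<Rightarrow> nat) \<Rightarrow> (nat \<Rightarrow> 'a::field mat) \<Rightarrow> nat \<Rightarrow> nat \<Rightarrow> 'a vec list \<Rightarrow> bool" where
  "cohom_basis n D d j e \<longleftrightarrow>
     set e \<subseteq> cocyc n D d j \<and>
     (\<forall>c \<in> carrier_vec (length e). mat_of_cols (n j) e *\<^sub>v c \<in> cobound n D j \<longrightarrow> c = 0\<^sub>v (length e)) \<and>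
     (\<forall>x \<in> cocyc n D d j. \<exists>c \<in> carrier_vec (length e). x - mat_of_cols (n j) e *\<^sub>v c \<in> cobound n D j)"

definition detH_rep :: "(nat \<Rightarrow> nat) \<Rightarrow> (nat \<Rightarrow> 'a::field mat) \<Rightarrow> nat \<Rightarrow> 'a \<times> (nat \<Rightarrow> 'a vec list) \<Rightarrow> bool" where
  "detH_rep n D d p \<longleftrightarrow> (\<forall>j\<le>d. cohom_basis n D d j (snd p j))"

definition alt_pow :: "nat \<Rightarrow> 'a::field \<Rightarrow> 'a" where
  "alt_pow j x = (if even j then x else inverse x)"

text \<open>Equality of the represented elements of Det(H^\<bullet>(\<partial>)):
 if eta' j = M j eta j modulo B^j, then [eta' j] = det (M j) [eta j].\<close>

definition detH_eq :: "(nat \<Rightarrow> nat) \<Rightarrow> (nat \<Rightarrow> 'a::field mat) \<Rightarrow> nat \<Rightarrow>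
     'a \<times> (nat \<Rightarrow> 'a vec list) \<Rightarrow> 'a \<times> (nat \<Rightarrow> 'a vec list) \<Rightarrow> bool" where
  "detH_eq n D d p q \<longleftrightarrow> detH_rep n D d p \<and> detH_rep n D d q \<and>
     (\<exists>M. (\<forall>j\<le>d. M j \<in> carrier_mat (length (snd p j)) (length (snd p j)) \<and>
              length (snd q j) = length (snd p j) \<and>
              (\<forall>i < length (snd p j).
                  snd q j ! i - mat_of_cols (n j) (snd p j) *\<^sub>v row (M j) i \<in> cobound n D j)) \<and>
          fst p = fst q * (\<Prod>j\<le>d. alt_pow j (det (M j))))"

text \<open>The data for \<phi>: a j is an ordered basis of A^j, eta j one of H^j, such that
  \<partial>(a (j-1)), eta j, a j together form an ordered basis of C^j, eta j \<subseteq> Ker, A^d = 0.\<close>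

definition dprev :: "(nat \<Rightarrow> 'a::field mat) \<Rightarrow> (nat \<Rightarrow> 'a vec list) \<Rightarrow> nat \<Rightarrow> 'a vec list" where
  "dprev D a j = (if j = 0 then [] else map (\<lambda>v. D (j - 1) *\<^sub>v v) (a (j - 1)))"

definition phi_mat :: "(nat \<Rightarrow> nat) \<Rightarrow> (nat \<Rightarrow> 'a::field mat) \<Rightarrow> (nat \<Rightarrow> 'a vec list) \<Rightarrow> (nat \<Rightarrow> 'a vec list) \<Rightarrow> nat \<Rightarrow> 'a mat" where
  "phi_mat n D a eta j = mat_of_cols (n j) (dprev D a j @ eta j @ a j)"

definition phi_datum :: "(nat \<Rightarrow> nat) \<Rightarrow> (nat \<Rightarrow> 'a::field mat) \<Rightarrow> nat \<Rightarrow> (nat \<Rightarrow> 'a vec list) \<times> (nat \<Rightarrow> 'a vec list) \<Rightarrow> bool" where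
  "phi_datum n D d ae \<longleftrightarrow>
     (\<forall>j\<le>d. set (fst ae j) \<subseteq> carrier_vec (n j) \<and> set (snd ae j) \<subseteq> cocyc n D d j \<and>
            length (dprev D (fst ae) j) + length (snd ae j) + length (fst ae j) = n j \<and>
            det (phi_mat n D (fst ae) (snd ae) j) \<noteq> 0) \<and>
     fst ae d = []"

text \<open>Refined torsion for d = 2r-1.  We take c_j = e_1 \<and> ... \<and> e_(n j) (standard basis) for j < r;
 then c_(d-j) := Gam c_j for the entries of degree >= r, i.e. c_k is the wedge of the columns
 of Gam (d-k).  With h_j = t_j [eta j], c_j = \<mu>(\<partial>a_(j-1) \<otimes> h_j \<otimes> a_j) gives
 t_j = det(c_j-columns) / det(phi_mat j).\<close>

definition c_mat :: "(nat \<Rightarrow> nat) \<Rightarrow> (nat \<Rightarrow> 'a::field mat) \<Rightarrow> nat \<Rightarrow> nat \<Rightarrow> 'a mat" where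
  "c_mat n Gam r k = (if k < r then 1\<^sub>m (n k) else Gam (2 * r - 1 - k))"

definition N_exp :: "(nat \<Rightarrow> 'a vec list) \<Rightarrow> nat \<Rightarrow> nat" where
  "N_exp a d = (\<Sum>j\<le>d. let m = length (a j) in if even j then m * (m - 1) else m * (m + 1)) div 2"

definition R_exp :: "(nat \<Rightarrow> nat) \<Rightarrow> nat \<Rightarrow> nat" where
  "R_exp n r = (\<Sum>j<r. if even (r + j) then n j * (n j + 1) else n j * (n j - 1)) div 2"

definition rho_rep :: "(nat \<Rightarrow> nat) \<Rightarrow> (nat \<Rightarrow> 'a::field mat) \<Rightarrow> (nat \<Rightarrow> 'a mat) \<Rightarrow> nat \<Rightarrow>
     (nat \<Rightarrow> 'a vec list) \<times> (nat \<Rightarrow> 'a vec list) \<Rightarrow> 'a \<times> (nat \<Rightarrow> 'a vec list)" where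
  "rho_rep n D Gam r ae =
     (let d = 2 * r - 1 in
      ((-1) ^ (R_exp n r + N_exp (fst ae) d) *
         (\<Prod>j\<le>d. alt_pow j (det (c_mat n Gam r j) / det (phi_mat n D (fst ae) (snd ae) j))),
       snd ae))"

definition rho :: "(nat \<Rightarrow> nat) \<Rightarrow> (nat \<Rightarrow> 'a::field mat) \<Rightarrow> (nat \<Rightarrow> 'a mat) \<Rightarrow> nat \<Rightarrow> 'a \<times> (nat \<Rightarrow> 'a vec list)" where
  "rho n D Gam r = rho_rep n D Gam r (SOME ae. phi_datum n D (2 * r - 1) ae)"

definition dsum_dim :: "(nat \<Rightarrow> nat) \<Rightarrow> (nat \<Rightarrow> nat) \<Rightarrow> nat \<Rightarrow> nat" where
  "dsum_dim n m j = n j + m j"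

definition dsum_diff :: "(nat \<Rightarrow> nat) \<Rightarrow> (nat \<Rightarrow> nat) \<Rightarrow> (nat \<Rightarrow> 'a::field mat) \<Rightarrow> (nat \<Rightarrow> 'a mat) \<Rightarrow> nat \<Rightarrow> 'a mat" where
  "dsum_diff n m D E j = four_block_mat (D j) (0\<^sub>m (n (Suc j)) (m j)) (0\<^sub>m (m (Suc j)) (n j)) (E j)"

definition dsum_chir :: "(nat \<Rightarrow> nat) \<Rightarrow> (nat \<Rightarrow> nat) \<Rightarrow> nat \<Rightarrow> (nat \<Rightarrow> 'a::field mat) \<Rightarrow> (nat \<Rightarrow> 'a mat) \<Rightarrow> nat \<Rightarrow> 'a mat" where
  "dsum_chir n m d G H j = four_block_mat (G j) (0\<^sub>m (n (d - j)) (m j)) (0\<^sub>m (m (d - j)) (n j)) (H j)"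

text \<open>Graded fusion \<mu>_(H(\<partial>),H(\<partial>~)) into Det(H^\<bullet>(\<partial>\<oplus>\<partial>~)), using the canonical identification
 H^j(\<partial>) \<oplus> H^j(\<partial>~) = H^j(\<partial>\<oplus>\<partial>~) (classes of x \<oplus> 0 and 0 \<oplus> y).\<close>

definition mu_H :: "(nat \<Rightarrow> nat) \<Rightarrow> (nat \<Rightarrow> nat) \<Rightarrow> nat \<Rightarrow>
     'a::field \<times> (nat \<Rightarrow> 'a vec list) \<Rightarrow> 'a \<times> (nat \<Rightarrow> 'a vec list) \<Rightarrow> 'a \<times> (nat \<Rightarrow> 'a vec list)" where
  "mu_H n m d p q =
     ((-1) ^ (\<Sum>j\<le>d. \<Sum>k<j. length (snd p j) * length (snd q k)) * fst p * fst q,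
      \<lambda>j. map (\<lambda>v. v @\<^sub>v 0\<^sub>v (m j)) (snd p j) @ map (\<lambda>w. 0\<^sub>v (n j) @\<^sub>v w) (snd q j))"

end

(*
  The refined torsion is computed from a basis of each C^j adapted to a splitting
  C^j = B^j + H^j + A^j, where the basis of B^j is the image under the differential of the basis
  of A^(j-1).  The representative does not depend on the adapted basis: the change of basis
  matrix is block upper triangular, its B-block in degree j+1 equals its A-block in degree j,
  so these determinants telescope in the alternating product and only the change of the
  cohomology basis remains, which is exactly what detH_eq allows.

  For a direct sum, juxtaposing adapted bases of the two complexes gives an adapted basis of
  the sum.  Its determinant is the product of the two determinants up to the sign of
  regrouping the columns, and the chirality blocks are block diagonal.  A parity computation,
  which uses that a chirality operator forces dim C^(d-j) = dim C^j, identifies the remaining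
  sign with the sign in the fusion map mu_H.
*)

theory Submission
  imports Defs
begin

subsection \<open>Matrices given by lists of columns\<close>

lemma sum_lessThan_add:
  "(\<Sum>j<a + b. f j) = (\<Sum>j<a. f j) + (\<Sum>j<b. f (a + j))" for f :: "nat \<Rightarrow> 'b::comm_monoid_add"
  by (induction b) (auto simp: add.assoc)

lemma mult_mat_vec_zero: "A \<in> carrier_mat k l \<Longrightarrow> A *\<^sub>v 0\<^sub>v l = (0\<^sub>v k :: 'a::field vec)"
  by (rule eq_vecI) auto

lemma zero_mult_mat_vec: "y \<in> carrier_vec l \<Longrightarrow> 0\<^sub>m k l *\<^sub>v y = (0\<^sub>v k :: 'a::field vec)"
  by (rule eq_vecI) auto

lemma mat_of_cols_mult_vec_nth:
  assumes "c \<in> carrier_vec (length L)" "i < n"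
  shows "(mat_of_cols n L *\<^sub>v c) $ i = (\<Sum>j<length L. L ! j $ i * c $ j)"
  using assms by (auto simp: mat_of_cols_def scalar_prod_def row_def intro!: sum.cong)

lemma mat_of_cols_mult_vec_carrier [simp]: "mat_of_cols n L *\<^sub>v c \<in> carrier_vec n"
  by (simp add: carrier_vecI)

lemma mat_of_cols_append_mult_vec:
  assumes "c1 \<in> carrier_vec (length L1)" "c2 \<in> carrier_vec (length L2)"
  shows "mat_of_cols n (L1 @ L2) *\<^sub>v (c1 @\<^sub>v c2) = mat_of_cols n L1 *\<^sub>v c1 + mat_of_cols n L2 *\<^sub>v c2"
proof (rule eq_vecI)
  fix i assume "i < dim_vec (mat_of_cols n L1 *\<^sub>v c1 + mat_of_cols n L2 *\<^sub>v c2)"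
  hence i: "i < n" by simp
  have "(mat_of_cols n (L1 @ L2) *\<^sub>v (c1 @\<^sub>v c2)) $ i
     = (\<Sum>j<length L1 + length L2. (L1 @ L2) ! j $ i * (c1 @\<^sub>v c2) $ j)"
    using mat_of_cols_mult_vec_nth[of "c1 @\<^sub>v c2" "L1 @ L2" i n] assms i by simp
  also have "\<dots> = (\<Sum>j<length L1. L1 ! j $ i * c1 $ j) + (\<Sum>j<length L2. L2 ! j $ i * c2 $ j)"
    using assms by (simp add: sum_lessThan_add nth_append)
  also have "\<dots> = (mat_of_cols n L1 *\<^sub>v c1 + mat_of_cols n L2 *\<^sub>v c2) $ i"
    using assms i by (simp add: mat_of_cols_mult_vec_nth del: index_mult_mat_vec)
  finally show "(mat_of_cols n (L1 @ L2) *\<^sub>v (c1 @\<^sub>v c2)) $ i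
      = (mat_of_cols n L1 *\<^sub>v c1 + mat_of_cols n L2 *\<^sub>v c2) $ i" .
qed simp

lemma mat_of_cols_append3_mult_vec:
  assumes "c1 \<in> carrier_vec (length L1)" "c2 \<in> carrier_vec (length L2)" "c3 \<in> carrier_vec (length L3)"
  shows "mat_of_cols n (L1 @ L2 @ L3) *\<^sub>v (c1 @\<^sub>v c2 @\<^sub>v c3)
     = mat_of_cols n L1 *\<^sub>v c1 + mat_of_cols n L2 *\<^sub>v c2 + mat_of_cols n L3 *\<^sub>v c3"
  using assms by (simp add: mat_of_cols_append_mult_vec assoc_add_vec[of _ n])

lemma mat_of_cols_zero_cols_mult_vec:
  assumes "\<forall>v \<in> set L. v = 0\<^sub>v k" "c \<in> carrier_vec (length L)"
  shows "mat_of_cols k L *\<^sub>v c = (0\<^sub>v k :: 'a::field vec)"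
proof (rule eq_vecI)
  fix i assume "i < dim_vec (0\<^sub>v k :: 'a vec)"
  hence i: "i < k" by simp
  have "(mat_of_cols k L *\<^sub>v c) $ i = (\<Sum>j<length L. L ! j $ i * c $ j)"
    by (rule mat_of_cols_mult_vec_nth[OF assms(2) i])
  also have "\<dots> = 0" using assms(1) i by (intro sum.neutral) (metis lessThan_iff nth_mem index_zero_vec(1) mult_zero_left)
  finally show "(mat_of_cols k L *\<^sub>v c) $ i = 0\<^sub>v k $ i" using i by simp
qed simp

lemma mat_of_cols_mult_zero_vec [simp]: "mat_of_cols n L *\<^sub>v 0\<^sub>v (length L) = (0\<^sub>v n :: 'a::field vec)"
  by (rule mult_mat_vec_zero) simp

lemma mat_of_cols_Nil_mult_vec: "c \<in> carrier_vec 0 \<Longrightarrow> mat_of_cols k [] *\<^sub>v c = (0\<^sub>v k :: 'a::field vec)"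
  by (rule mat_of_cols_zero_cols_mult_vec) auto

lemma mat_of_cols_map_mult:
  fixes M :: "'a::field mat"
  assumes M: "M \<in> carrier_mat n k" and C: "set C \<subseteq> carrier_vec k"
  shows "mat_of_cols n (map (\<lambda>c. M *\<^sub>v c) C) = M * mat_of_cols k C"
proof (rule eq_matI)
  fix i j assume "i < dim_row (M * mat_of_cols k C)" "j < dim_col (M * mat_of_cols k C)"
  moreover have "j < length C \<Longrightarrow> col (mat_of_cols k C) j = C ! j"
    using C by (intro col_mat_of_cols) auto
  ultimately show "mat_of_cols n (map (\<lambda>c. M *\<^sub>v c) C) $$ (i, j) = (M * mat_of_cols k C) $$ (i, j)"
    using M by (simp add: mat_of_cols_index)
qed (use M in auto)

lemma mult_mat_vec_mat_of_cols:
  fixes M :: "'a::field mat"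
  assumes M: "M \<in> carrier_mat k n" and L: "set L \<subseteq> carrier_vec n" and c: "c \<in> carrier_vec (length L)"
  shows "M *\<^sub>v (mat_of_cols n L *\<^sub>v c) = mat_of_cols k (map (\<lambda>v. M *\<^sub>v v) L) *\<^sub>v c"
  using assoc_mult_mat_vec[OF M mat_of_cols_carrier(1) c] mat_of_cols_map_mult[OF M L] by simp

subsection \<open>Linear independence and spans of column lists\<close>

definition lin_indep_cols :: "nat \<Rightarrow> 'a::field vec list \<Rightarrow> bool" where
  "lin_indep_cols n L \<longleftrightarrow>
     (\<forall>c \<in> carrier_vec (length L). mat_of_cols n L *\<^sub>v c = 0\<^sub>v n \<longrightarrow> c = 0\<^sub>v (length L))"

definition in_span_cols :: "nat \<Rightarrow> 'a::field vec list \<Rightarrow> 'a vec \<Rightarrow> bool" where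
  "in_span_cols n L x \<longleftrightarrow> (\<exists>c \<in> carrier_vec (length L). x = mat_of_cols n L *\<^sub>v c)"

lemma wide_mat_kernel_nonzero:
  fixes A :: "'a::field mat"
  assumes A: "A \<in> carrier_mat k l" and kl: "k < l"
  obtains v where "v \<in> carrier_vec l" "v \<noteq> 0\<^sub>v l" "A *\<^sub>v v = 0\<^sub>v k"
proof -
  \<comment> \<open>pad A with zero rows to a singular square matrix\<close>
  define A' where "A' = mat l l (\<lambda>(i,j). if i < k then A $$ (i,j) else 0)"
  have A': "A' \<in> carrier_mat l l" unfolding A'_def by simp
  have rows: "A' = mat\<^sub>r l l (\<lambda>i. if i = l - 1 then 0\<^sub>v l else vec l (\<lambda>j. A' $$ (i,j)))"
    by (rule eq_matI) (use kl in \<open>auto simp: A'_def mat_of_rows_def\<close>)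
  have "det A' = 0"
    by (subst rows, rule det_row_0) (use kl in auto)
  then obtain v where v: "v \<in> carrier_vec l" "v \<noteq> 0\<^sub>v l" "A' *\<^sub>v v = 0\<^sub>v l"
    using det_0_iff_vec_prod_zero_field[OF A'] by auto
  have "(A *\<^sub>v v) $ i = 0" if i: "i < k" for i
  proof -
    have "(A *\<^sub>v v) $ i = (A' *\<^sub>v v) $ i"
      using A i kl v(1) by (auto simp: A'_def scalar_prod_def row_def intro!: sum.cong)
    also have "\<dots> = 0" using v(3) i kl by simp
    finally show ?thesis .
  qed
  hence "A *\<^sub>v v = 0\<^sub>v k" using A by (intro eq_vecI) auto
  with v that show ?thesis by blast
qed

lemma lin_indep_cols_Nil: "lin_indep_cols n ([] :: 'a::field vec list)"
  unfolding lin_indep_cols_def by (auto dest: carrier_vecD)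

lemma lin_indep_cols_length:
  assumes "lin_indep_cols n (L :: 'a::field vec list)"
  shows "length L \<le> n"
proof (rule ccontr)
  assume "\<not> length L \<le> n"
  hence "n < length L" by simp
  then obtain v where "v \<in> carrier_vec (length L)" "v \<noteq> 0\<^sub>v (length L)" "mat_of_cols n L *\<^sub>v v = 0\<^sub>v n"
    by (rule wide_mat_kernel_nonzero[OF mat_of_cols_carrier(1)])
  with assms show False unfolding lin_indep_cols_def by blast
qed

lemma lin_indep_cols_coeffs_unique:
  assumes "lin_indep_cols n L" "c1 \<in> carrier_vec (length L)" "c2 \<in> carrier_vec (length L)"
    "mat_of_cols n L *\<^sub>v c1 = mat_of_cols n L *\<^sub>v c2"
  shows "c1 = c2"
proof -
  have "mat_of_cols n L *\<^sub>v (c1 - c2) = 0\<^sub>v n"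
    using assms(2-4) by (simp add: mult_minus_distrib_mat_vec[OF mat_of_cols_carrier(1)])
  hence "c1 - c2 = 0\<^sub>v (length L)" using assms(1-3) unfolding lin_indep_cols_def by auto
  show ?thesis
  proof (rule eq_vecI)
    fix i assume "i < dim_vec c2"
    hence "(c1 - c2) $ i = 0" using \<open>c1 - c2 = _\<close> assms(2,3) by simp
    thus "c1 $ i = c2 $ i" using \<open>i < dim_vec c2\<close> assms(2,3) by simp
  qed (use assms(2,3) in simp)
qed

lemma lin_indep_cols_appendD:
  assumes "lin_indep_cols n (L1 @ L2)" shows "lin_indep_cols n L1"
  unfolding lin_indep_cols_def
proof (intro ballI impI)
  fix c assume c: "c \<in> carrier_vec (length L1)" "mat_of_cols n L1 *\<^sub>v c = 0\<^sub>v n"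
  have "mat_of_cols n (L1 @ L2) *\<^sub>v (c @\<^sub>v 0\<^sub>v (length L2)) = 0\<^sub>v n"
    using c by (simp add: mat_of_cols_append_mult_vec)
  moreover have "c @\<^sub>v 0\<^sub>v (length L2) \<in> carrier_vec (length (L1 @ L2))" using c by auto
  ultimately have z: "c @\<^sub>v 0\<^sub>v (length L2) = 0\<^sub>v (length (L1 @ L2))"
    using assms unfolding lin_indep_cols_def by blast
  show "c = 0\<^sub>v (length L1)"
  proof (rule eq_vecI)
    fix i assume "i < dim_vec (0\<^sub>v (length L1) :: 'a vec)"
    hence i: "i < length L1" by simp
    have "(c @\<^sub>v 0\<^sub>v (length L2)) $ i = 0" using z i by simp
    thus "c $ i = 0\<^sub>v (length L1) $ i" using i c by simp
  qed (use c in simp)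
qed

lemma lin_indep_cols_iff_det_nonzero:
  fixes L :: "'a::field vec list"
  assumes "length L = n"
  shows "lin_indep_cols n L \<longleftrightarrow> det (mat_of_cols n L) \<noteq> 0"
proof -
  have "mat_of_cols n L \<in> carrier_mat n n" using mat_of_cols_carrier(1)[of n L] assms by simp
  from det_0_iff_vec_prod_zero_field[OF this] show ?thesis
    using assms unfolding lin_indep_cols_def by auto
qed

lemma in_span_cols_if_det_nonzero:
  fixes L :: "'a::field vec list"
  assumes "length L = n" "det (mat_of_cols n L) \<noteq> 0" "x \<in> carrier_vec n"
  shows "in_span_cols n L x"
proof -
  have A: "mat_of_cols n L \<in> carrier_mat n n" using mat_of_cols_carrier(1)[of n L] assms(1) by simp
  from det_non_zero_imp_unit[OF A assms(2)]
  obtain B where B: "B \<in> carrier_mat n n" "mat_of_cols n L * B = 1\<^sub>m n"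
    unfolding Units_def ring_mat_def by auto
  have "x = mat_of_cols n L *\<^sub>v (B *\<^sub>v x)"
    using B assms(3) assoc_mult_mat_vec[OF A B(1) assms(3)] by simp
  thus ?thesis unfolding in_span_cols_def using B(1) assms(1,3)
    by (intro bexI[of _ "B *\<^sub>v x"]) (auto intro: mult_mat_vec_carrier)
qed

lemma lin_indep_cols_unit_vecs: "lin_indep_cols n (unit_vecs n :: 'a::field vec list)"
proof -
  have "mat_of_cols n (unit_vecs n) = (1\<^sub>m n :: 'a mat)"
    by (rule eq_matI) (auto simp: mat_of_cols_def unit_vecs_def unit_vec_def)
  thus ?thesis unfolding lin_indep_cols_def by (auto simp: unit_vecs_def)
qed

lemma lin_indep_cols_length_le:
  fixes X :: "'a::field vec list"
  assumes ind: "lin_indep_cols n X" and sub: "\<forall>x \<in> set X. in_span_cols n Y x"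
  shows "length X \<le> length Y"
proof (rule ccontr)
  assume wide: "\<not> length X \<le> length Y"
  have "\<forall>i < length X. \<exists>c. c \<in> carrier_vec (length Y) \<and> X ! i = mat_of_cols n Y *\<^sub>v c"
    using sub unfolding in_span_cols_def by auto
  then obtain c where c: "\<And>i. i < length X \<Longrightarrow> c i \<in> carrier_vec (length Y) \<and> X ! i = mat_of_cols n Y *\<^sub>v c i"
    by metis
  define C where "C = map c [0..<length X]"
  have C: "set C \<subseteq> carrier_vec (length Y)" "length C = length X" using c by (auto simp: C_def)
  have "X = map (\<lambda>v. mat_of_cols n Y *\<^sub>v v) C"
    using c by (intro nth_equalityI) (auto simp: C_def)
  hence XC: "mat_of_cols n X = mat_of_cols n Y * mat_of_cols (length Y) C"
    using mat_of_cols_map_mult[OF mat_of_cols_carrier(1) C(1)] by simp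
  have "length Y < length C" using wide C(2) by simp
  then obtain v where v: "v \<in> carrier_vec (length C)" "v \<noteq> 0\<^sub>v (length C)"
     "mat_of_cols (length Y) C *\<^sub>v v = 0\<^sub>v (length Y)"
    by (rule wide_mat_kernel_nonzero[OF mat_of_cols_carrier(1)])
  have "mat_of_cols n X *\<^sub>v v = mat_of_cols n Y *\<^sub>v (mat_of_cols (length Y) C *\<^sub>v v)"
    unfolding XC using v(1) C(2) by (intro assoc_mult_mat_vec) auto
  also have "\<dots> = 0\<^sub>v n" using v(3) by simp
  finally show False using ind v(1,2) C(2) unfolding lin_indep_cols_def by auto
qed

lemma spanning_lin_indep_cols_length:
  fixes L :: "'a::field vec list"
  assumes "lin_indep_cols n L" "\<forall>x \<in> carrier_vec n. in_span_cols n L x"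
  shows "length L = n"
proof -
  have "length (unit_vecs n :: 'a vec list) \<le> length L"
    by (rule lin_indep_cols_length_le[OF lin_indep_cols_unit_vecs]) (use assms(2) unit_vecs_carrier in blast)
  thus ?thesis using lin_indep_cols_length[OF assms(1)] by (simp add: unit_vecs_def)
qed

lemma mat_of_cols_snoc_mult_vec:
  assumes "c \<in> carrier_vec (length L)" "x \<in> carrier_vec n"
  shows "mat_of_cols n (L @ [x]) *\<^sub>v (c @\<^sub>v vec 1 (\<lambda>_. t)) = mat_of_cols n L *\<^sub>v c + t \<cdot>\<^sub>v (x :: 'a::field vec)"
proof -
  have "mat_of_cols n [x] *\<^sub>v vec 1 (\<lambda>_. t) = t \<cdot>\<^sub>v x"
  proof (rule eq_vecI)
    fix i assume "i < dim_vec (t \<cdot>\<^sub>v x)"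
    hence "i < n" using assms(2) by simp
    thus "(mat_of_cols n [x] *\<^sub>v vec 1 (\<lambda>_. t)) $ i = (t \<cdot>\<^sub>v x) $ i"
      using mat_of_cols_mult_vec_nth[of "vec 1 (\<lambda>_. t)" "[x]" i n] assms(2) by simp
  qed (use assms(2) in simp)
  thus ?thesis using assms(1) mat_of_cols_append_mult_vec[of c L "vec 1 (\<lambda>_. t)" "[x]" n] by simp
qed

lemma in_span_cols_if_lin_comb_zero:
  fixes x :: "'a::field vec"
  assumes c: "c \<in> carrier_vec (length L)" and x: "x \<in> carrier_vec n"
    and comb: "mat_of_cols n L *\<^sub>v c + t \<cdot>\<^sub>v x = 0\<^sub>v n" and t: "t \<noteq> 0"
  shows "in_span_cols n L x"
proof -
  have "x = mat_of_cols n L *\<^sub>v ((- inverse t) \<cdot>\<^sub>v c)"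
  proof (rule eq_vecI)
    fix i assume "i < dim_vec (mat_of_cols n L *\<^sub>v ((- inverse t) \<cdot>\<^sub>v c))"
    hence i: "i < n" by simp
    have "(mat_of_cols n L *\<^sub>v c) $ i + t * x $ i = 0"
      using arg_cong[OF comb, of "\<lambda>v. v $ i"] i x by simp
    thus "x $ i = (mat_of_cols n L *\<^sub>v ((- inverse t) \<cdot>\<^sub>v c)) $ i"
      using t i by (simp add: mult_mat_vec[OF mat_of_cols_carrier(1) c] field_simps eq_neg_iff_add_eq_0)
  qed (use x in simp)
  thus ?thesis unfolding in_span_cols_def using c by (metis smult_carrier_vec)
qed

lemma lin_indep_cols_snoc:
  fixes L :: "'a::field vec list"
  assumes ind: "lin_indep_cols n L" and x: "x \<in> carrier_vec n" and nx: "\<not> in_span_cols n L x"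
  shows "lin_indep_cols n (L @ [x])"
  unfolding lin_indep_cols_def
proof (intro ballI impI)
  fix c assume c: "c \<in> carrier_vec (length (L @ [x]))" and z: "mat_of_cols n (L @ [x]) *\<^sub>v c = 0\<^sub>v n"
  define c1 where "c1 = vec_first c (length L)"
  define t where "t = c $ length L"
  have c1: "c1 \<in> carrier_vec (length L)" by (simp add: c1_def)
  have c_split: "c = c1 @\<^sub>v vec 1 (\<lambda>_. t)"
    using c by (intro eq_vecI) (auto simp: c1_def t_def vec_first_def less_Suc_eq)
  have comb: "mat_of_cols n L *\<^sub>v c1 + t \<cdot>\<^sub>v x = 0\<^sub>v n"
    using z mat_of_cols_snoc_mult_vec[OF c1 x] c_split by simp
  hence t0: "t = 0" using in_span_cols_if_lin_comb_zero[OF c1 x] nx by blast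
  hence "t \<cdot>\<^sub>v x = 0\<^sub>v n" using x by (intro eq_vecI) auto
  hence "c1 = 0\<^sub>v (length L)" using comb ind c1 unfolding lin_indep_cols_def by simp
  thus "c = 0\<^sub>v (length (L @ [x]))"
    using c_split t0 by (intro eq_vecI) (auto simp: less_Suc_eq)
qed

lemma lin_indep_cols_extend:
  fixes L :: "'a::field vec list"
  assumes S: "S \<subseteq> carrier_vec n" and ind: "lin_indep_cols n L"
  obtains ext where "set ext \<subseteq> S" "lin_indep_cols n (L @ ext)" "\<forall>x \<in> S. in_span_cols n (L @ ext) x"
proof -
  \<comment> \<open>a longest independent extension by vectors of S spans S\<close>
  define K where "K = {length ext | ext. set ext \<subseteq> S \<and> lin_indep_cols n (L @ ext)}"
  have "K \<subseteq> {..n}" unfolding K_def using lin_indep_cols_length by fastforce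
  hence fin: "finite K" using finite_subset by blast
  have "0 \<in> K" unfolding K_def using ind by force
  with fin have "Max K \<in> K" by (intro Max_in) auto
  then obtain ext where ext: "set ext \<subseteq> S" "lin_indep_cols n (L @ ext)" "length ext = Max K"
    unfolding K_def by auto
  have "in_span_cols n (L @ ext) x" if xS: "x \<in> S" for x
  proof (rule ccontr)
    assume "\<not> in_span_cols n (L @ ext) x"
    with ext(2) xS S have "lin_indep_cols n ((L @ ext) @ [x])" by (intro lin_indep_cols_snoc) auto
    with ext xS have "length (ext @ [x]) \<in> K" unfolding K_def
      by (intro CollectI exI[of _ "ext @ [x]"]) auto
    thus False using Max_ge[OF fin] ext(3) by fastforce
  qed
  with ext that show ?thesis by blast
qed

definition vec_slice :: "'a vec \<Rightarrow> nat \<Rightarrow> nat \<Rightarrow> 'a vec" where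
  "vec_slice c s l = vec l (\<lambda>i. c $ (s + i))"

lemma dim_vec_slice [simp]: "dim_vec (vec_slice c s l) = l"
  by (simp add: vec_slice_def)

lemma vec_slice_carrier [simp]: "vec_slice c s l \<in> carrier_vec l"
  by (simp add: carrier_vecI)

lemma vec_slice_split3:
  assumes "c \<in> carrier_vec (k1 + k2 + k3)"
  shows "c = vec_slice c 0 k1 @\<^sub>v vec_slice c k1 k2 @\<^sub>v vec_slice c (k1 + k2) k3"
  by (rule eq_vecI) (use assms in \<open>auto simp: vec_slice_def\<close>)

lemma vec_slice_split2:
  assumes "c \<in> carrier_vec (k1 + k2)"
  shows "c = vec_slice c 0 k1 @\<^sub>v vec_slice c k1 k2"
  by (rule eq_vecI) (use assms in \<open>auto simp: vec_slice_def\<close>)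

subsection \<open>Cocycles and coboundaries\<close>

locale cochain_complex =
  fixes n :: "nat \<Rightarrow> nat" and D :: "nat \<Rightarrow> 'a::field mat" and d :: nat
  assumes complex: "is_complex n D d"
begin

lemma diff_carrier: "j < d \<Longrightarrow> D j \<in> carrier_mat (n (Suc j)) (n j)"
  using complex unfolding is_complex_def by auto

lemma diff_diff: "Suc j < d \<Longrightarrow> D (Suc j) * D j = 0\<^sub>m (n (Suc (Suc j))) (n j)"
  using complex unfolding is_complex_def by auto

lemma mem_cocyc_iff:
  "x \<in> cocyc n D d j \<longleftrightarrow> x \<in> carrier_vec (n j) \<and> (j < d \<longrightarrow> D j *\<^sub>v x = 0\<^sub>v (n (Suc j)))"
  unfolding cocyc_def by auto

lemma cocyc_carrier: "cocyc n D d j \<subseteq> carrier_vec (n j)"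
  unfolding cocyc_def by auto

lemma cocyc_top: "cocyc n D d d = carrier_vec (n d)"
  unfolding cocyc_def by auto

lemma diff_mat_of_cols_cocyc:
  assumes L: "set L \<subseteq> cocyc n D d j" and c: "c \<in> carrier_vec (length L)" and j: "j < d"
  shows "D j *\<^sub>v (mat_of_cols (n j) L *\<^sub>v c) = 0\<^sub>v (n (Suc j))"
proof -
  have "set L \<subseteq> carrier_vec (n j)" using L cocyc_carrier by blast
  hence "D j *\<^sub>v (mat_of_cols (n j) L *\<^sub>v c) = mat_of_cols (n (Suc j)) (map (\<lambda>v. D j *\<^sub>v v) L) *\<^sub>v c"
    by (rule mult_mat_vec_mat_of_cols[OF diff_carrier[OF j] _ c])
  also have "\<dots> = 0\<^sub>v (n (Suc j))"
    by (rule mat_of_cols_zero_cols_mult_vec) (use L j c in \<open>auto simp: mem_cocyc_iff\<close>)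
  finally show ?thesis .
qed

lemma cobound_subset_cocyc:
  assumes "j \<le> d" shows "cobound n D j \<subseteq> cocyc n D d j"
proof
  fix x assume x: "x \<in> cobound n D j"
  show "x \<in> cocyc n D d j"
  proof (cases j)
    case 0
    thus ?thesis using x diff_carrier[of 0] unfolding cobound_def mem_cocyc_iff
      by (auto simp: mult_mat_vec_zero)
  next
    case (Suc i)
    then obtain y where y: "y \<in> carrier_vec (n i)" "x = D i *\<^sub>v y" using x unfolding cobound_def by auto
    have "D j *\<^sub>v x = 0\<^sub>v (n (Suc j))" if "j < d"
    proof -
      have "D j *\<^sub>v x = (D (Suc i) * D i) *\<^sub>v y"
        using Suc that y diff_carrier[of i] diff_carrier[of "Suc i"] by simp
      thus ?thesis using diff_diff[of i] Suc that y by (simp add: zero_mult_mat_vec)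
    qed
    moreover have "x \<in> carrier_vec (n j)" using y diff_carrier[of i] Suc assms by auto
    ultimately show ?thesis unfolding mem_cocyc_iff by simp
  qed
qed

end

subsection \<open>Bases adapted to a complex\<close>

locale phi_basis = cochain_complex +
  fixes a eta :: "nat \<Rightarrow> 'a::field vec list"
  assumes datum: "phi_datum n D d (a, eta)"
begin

abbreviation "b j \<equiv> dprev D a j"
abbreviation "P j \<equiv> phi_mat n D a eta j"

lemma a_carrier: "j \<le> d \<Longrightarrow> set (a j) \<subseteq> carrier_vec (n j)"
  using datum unfolding phi_datum_def by auto

lemma eta_cocyc: "j \<le> d \<Longrightarrow> set (eta j) \<subseteq> cocyc n D d j"
  using datum unfolding phi_datum_def by auto

lemma eta_carrier: "j \<le> d \<Longrightarrow> set (eta j) \<subseteq> carrier_vec (n j)"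
  using eta_cocyc cocyc_carrier by blast

lemma a_top: "a d = []"
  using datum unfolding phi_datum_def by auto

lemma lengths: "j \<le> d \<Longrightarrow> length (b j) + length (eta j) + length (a j) = n j"
  using datum unfolding phi_datum_def by auto

lemma det_P_nonzero: "j \<le> d \<Longrightarrow> det (P j) \<noteq> 0"
  using datum unfolding phi_datum_def by auto

lemma b_cobound:
  assumes "j \<le> d" shows "set (b j) \<subseteq> cobound n D j"
proof (cases j)
  case (Suc i)
  with assms a_carrier[of i] show ?thesis unfolding cobound_def dprev_def by auto
qed (simp add: dprev_def)

lemma b_cocyc: "j \<le> d \<Longrightarrow> set (b j) \<subseteq> cocyc n D d j"
  using b_cobound cobound_subset_cocyc by blast

lemma cols_carrier: "j \<le> d \<Longrightarrow> set (b j @ eta j @ a j) \<subseteq> carrier_vec (n j)"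
  using b_cocyc eta_carrier a_carrier cocyc_carrier by fastforce

lemma cols_length: "j \<le> d \<Longrightarrow> length (b j @ eta j @ a j) = n j"
  using lengths[of j] by simp

lemma P_carrier: "j \<le> d \<Longrightarrow> P j \<in> carrier_mat (n j) (n j)"
  using mat_of_cols_carrier(1)[of "n j" "b j @ eta j @ a j"] cols_length[of j]
  unfolding phi_mat_def by simp

lemma cols_lin_indep: "j \<le> d \<Longrightarrow> lin_indep_cols (n j) (b j @ eta j @ a j)"
  using lin_indep_cols_iff_det_nonzero[OF cols_length] det_P_nonzero unfolding phi_mat_def by blast

lemma b_lin_indep: "j \<le> d \<Longrightarrow> lin_indep_cols (n j) (b j)"
  using cols_lin_indep lin_indep_cols_appendD by blast

lemma b_eta_lin_indep: "j \<le> d \<Longrightarrow> lin_indep_cols (n j) (b j @ eta j)"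
  using cols_lin_indep lin_indep_cols_appendD by (metis append.assoc)

lemma mat_of_cols_b_cobound:
  assumes "j \<le> d" "u \<in> carrier_vec (length (b j))"
  shows "mat_of_cols (n j) (b j) *\<^sub>v u \<in> cobound n D j"
proof (cases j)
  case 0
  thus ?thesis using assms(2) by (simp add: cobound_def dprev_def mat_of_cols_Nil_mult_vec)
next
  case (Suc i)
  hence "mat_of_cols (n j) (b j) *\<^sub>v u = D i *\<^sub>v (mat_of_cols (n i) (a i) *\<^sub>v u)"
    using assms a_carrier[of i] diff_carrier[of i]
    by (simp add: dprev_def mult_mat_vec_mat_of_cols)
  thus ?thesis using Suc unfolding cobound_def by auto
qed

lemma P_mult_append3:
  assumes "c1 \<in> carrier_vec (length (b j))" "c2 \<in> carrier_vec (length (eta j))"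
    "c3 \<in> carrier_vec (length (a j))"
  shows "P j *\<^sub>v (c1 @\<^sub>v c2 @\<^sub>v c3) =
    mat_of_cols (n j) (b j) *\<^sub>v c1 + mat_of_cols (n j) (eta j) *\<^sub>v c2 + mat_of_cols (n j) (a j) *\<^sub>v c3"
  unfolding phi_mat_def by (rule mat_of_cols_append3_mult_vec[OF assms])

definition coord :: "nat \<Rightarrow> 'a vec \<Rightarrow> 'a vec" where
  "coord j x = (SOME c. c \<in> carrier_vec (n j) \<and> x = P j *\<^sub>v c)"

lemma coord:
  assumes "j \<le> d" "x \<in> carrier_vec (n j)"
  shows "coord j x \<in> carrier_vec (n j)" "P j *\<^sub>v coord j x = x"
proof -
  have "in_span_cols (n j) (b j @ eta j @ a j) x"
    using in_span_cols_if_det_nonzero[OF cols_length] det_P_nonzero assms unfolding phi_mat_def by blast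
  hence "\<exists>c. c \<in> carrier_vec (n j) \<and> x = P j *\<^sub>v c"
    using cols_length[OF assms(1)] unfolding in_span_cols_def phi_mat_def by auto
  hence "coord j x \<in> carrier_vec (n j) \<and> x = P j *\<^sub>v coord j x"
    unfolding coord_def by (rule someI_ex)
  thus "coord j x \<in> carrier_vec (n j)" "P j *\<^sub>v coord j x = x" by auto
qed

lemma coord_unique:
  assumes "j \<le> d" "c \<in> carrier_vec (n j)" "x = P j *\<^sub>v c"
  shows "coord j x = c"
proof -
  have "x \<in> carrier_vec (n j)" using assms P_carrier[OF assms(1)] mult_mat_vec_carrier by blast
  thus ?thesis
    using lin_indep_cols_coeffs_unique[OF cols_lin_indep[OF assms(1)], of "coord j x" c]
      coord[OF assms(1)] assms cols_length[OF assms(1)]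
    unfolding phi_mat_def by auto
qed

lemma coord_append3:
  assumes j: "j \<le> d" and c: "c1 \<in> carrier_vec (length (b j))" "c2 \<in> carrier_vec (length (eta j))"
    "c3 \<in> carrier_vec (length (a j))"
  shows "coord j (mat_of_cols (n j) (b j) *\<^sub>v c1 + mat_of_cols (n j) (eta j) *\<^sub>v c2
      + mat_of_cols (n j) (a j) *\<^sub>v c3) = c1 @\<^sub>v c2 @\<^sub>v c3"
proof (rule coord_unique[OF j])
  show "c1 @\<^sub>v c2 @\<^sub>v c3 \<in> carrier_vec (n j)"
    using c lengths[OF j] by (metis append_carrier_vec add.assoc)
qed (use P_mult_append3[OF c] in simp)

lemma P_mult_vec_slices:
  assumes "j \<le> d" "c \<in> carrier_vec (n j)"
  shows "P j *\<^sub>v c = mat_of_cols (n j) (b j) *\<^sub>v vec_slice c 0 (length (b j))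
    + mat_of_cols (n j) (eta j) *\<^sub>v vec_slice c (length (b j)) (length (eta j))
    + mat_of_cols (n j) (a j) *\<^sub>v vec_slice c (length (b j) + length (eta j)) (length (a j))"
proof -
  have "c = vec_slice c 0 (length (b j)) @\<^sub>v vec_slice c (length (b j)) (length (eta j))
      @\<^sub>v vec_slice c (length (b j) + length (eta j)) (length (a j))"
    using assms lengths by (intro vec_slice_split3) simp
  thus ?thesis by (metis P_mult_append3 vec_slice_carrier)
qed

text \<open>Only the A-part of a vector survives the differential, and it is mapped onto the next B-part.\<close>

lemma diff_P_mult_vec:
  assumes i: "i < d" and c: "c \<in> carrier_vec (n i)"
  shows "D i *\<^sub>v (P i *\<^sub>v c) =
    mat_of_cols (n (Suc i)) (b (Suc i)) *\<^sub>v vec_slice c (length (b i) + length (eta i)) (length (a i))"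
proof -
  let ?B = "mat_of_cols (n i) (b i) *\<^sub>v vec_slice c 0 (length (b i))"
    and ?H = "mat_of_cols (n i) (eta i) *\<^sub>v vec_slice c (length (b i)) (length (eta i))"
    and ?A = "mat_of_cols (n i) (a i) *\<^sub>v vec_slice c (length (b i) + length (eta i)) (length (a i))"
  have Di: "D i \<in> carrier_mat (n (Suc i)) (n i)" by (rule diff_carrier[OF i])
  have "D i *\<^sub>v (P i *\<^sub>v c) = D i *\<^sub>v ?B + D i *\<^sub>v ?H + D i *\<^sub>v ?A"
    using P_mult_vec_slices[OF _ c] i Di by (simp add: mult_add_distrib_mat_vec[OF Di])
  also have "D i *\<^sub>v ?B = 0\<^sub>v (n (Suc i))"
    using b_cocyc[of i] i by (intro diff_mat_of_cols_cocyc) auto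
  also have "D i *\<^sub>v ?H = 0\<^sub>v (n (Suc i))"
    using eta_cocyc[of i] i by (intro diff_mat_of_cols_cocyc) auto
  also have "D i *\<^sub>v ?A = mat_of_cols (n (Suc i)) (b (Suc i))
      *\<^sub>v vec_slice c (length (b i) + length (eta i)) (length (a i))"
    using mult_mat_vec_mat_of_cols[OF Di a_carrier] i by (simp add: dprev_def)
  finally show ?thesis by simp
qed

lemma cobound_in_span_b:
  assumes j: "j \<le> d" and x: "x \<in> cobound n D j"
  obtains u where "u \<in> carrier_vec (length (b j))" "x = mat_of_cols (n j) (b j) *\<^sub>v u"
proof (cases j)
  case 0
  hence "x = mat_of_cols (n j) (b j) *\<^sub>v 0\<^sub>v 0" using x by (simp add: cobound_def dprev_def mat_of_cols_Nil_mult_vec)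
  thus ?thesis using 0 by (intro that[of "0\<^sub>v 0"]) (simp_all add: dprev_def)
next
  case (Suc i)
  hence i: "i < d" using j by simp
  obtain y where y: "y \<in> carrier_vec (n i)" "x = D i *\<^sub>v y" using x Suc unfolding cobound_def by auto
  hence "x = D i *\<^sub>v (P i *\<^sub>v coord i y)" using coord(2)[of i y] i by simp
  hence "x = mat_of_cols (n j) (b j)
      *\<^sub>v vec_slice (coord i y) (length (b i) + length (eta i)) (length (a i))"
    using diff_P_mult_vec[OF i coord(1)] y i Suc by simp
  thus ?thesis using Suc by (intro that) (simp_all add: dprev_def)
qed

lemma cocyc_in_span_b_eta:
  assumes j: "j \<le> d" and x: "x \<in> cocyc n D d j"
  obtains u where "u \<in> carrier_vec (length (b j @ eta j))" "x = mat_of_cols (n j) (b j @ eta j) *\<^sub>v u"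
proof -
  have xc: "x \<in> carrier_vec (n j)" using x cocyc_carrier by blast
  define c where "c = coord j x"
  have c: "c \<in> carrier_vec (n j)" "x = P j *\<^sub>v c" using coord[OF j xc] by (auto simp: c_def)
  define c3 where "c3 = vec_slice c (length (b j) + length (eta j)) (length (a j))"
  have "c3 = 0\<^sub>v (length (a j))"
  proof (cases "j < d")
    case True
    have "mat_of_cols (n (Suc j)) (b (Suc j)) *\<^sub>v c3 = D j *\<^sub>v x"
      using diff_P_mult_vec[OF True c(1)] c(2) by (simp add: c3_def)
    also have "\<dots> = 0\<^sub>v (n (Suc j))" using x True unfolding mem_cocyc_iff by simp
    finally show ?thesis
      using b_lin_indep[of "Suc j"] True unfolding lin_indep_cols_def by (simp add: dprev_def c3_def)
  next
    case False
    hence "length (a j) = 0" using j a_top by simp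
    thus ?thesis by (metis c3_def vec_slice_carrier carrier_vecD vec_of_dim_0)
  qed
  hence "x = mat_of_cols (n j) (b j @ eta j)
      *\<^sub>v (vec_slice c 0 (length (b j)) @\<^sub>v vec_slice c (length (b j)) (length (eta j)))"
    using P_mult_vec_slices[OF j c(1)] c(2) by (simp add: c3_def mat_of_cols_append_mult_vec)
  with that show ?thesis by (metis append_carrier_vec length_append vec_slice_carrier)
qed

theorem cohom_basis_eta:
  assumes j: "j \<le> d" shows "cohom_basis n D d j (eta j)"
  unfolding cohom_basis_def
proof (intro conjI ballI impI)
  show "set (eta j) \<subseteq> cocyc n D d j" by (rule eta_cocyc[OF j])
next
  fix c assume c: "c \<in> carrier_vec (length (eta j))"
    and cb: "mat_of_cols (n j) (eta j) *\<^sub>v c \<in> cobound n D j"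
  obtain u where u: "u \<in> carrier_vec (length (b j))"
    "mat_of_cols (n j) (eta j) *\<^sub>v c = mat_of_cols (n j) (b j) *\<^sub>v u"
    using cobound_in_span_b[OF j cb] by metis
  have "0\<^sub>v (length (b j)) @\<^sub>v c @\<^sub>v 0\<^sub>v (length (a j)) = coord j (mat_of_cols (n j) (eta j) *\<^sub>v c)"
    using coord_append3[OF j _ c, of "0\<^sub>v (length (b j))" "0\<^sub>v (length (a j))"] u(1) by simp
  also have "\<dots> = u @\<^sub>v 0\<^sub>v (length (eta j)) @\<^sub>v 0\<^sub>v (length (a j))"
    using coord_append3[OF j u(1), of "0\<^sub>v (length (eta j))" "0\<^sub>v (length (a j))"] u by simp
  finally show "c = 0\<^sub>v (length (eta j))"
    using append_vec_eq[OF zero_carrier_vec u(1)] append_vec_eq[OF c zero_carrier_vec] by simp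
next
  fix x assume x: "x \<in> cocyc n D d j"
  obtain u where u: "u \<in> carrier_vec (length (b j @ eta j))" "x = mat_of_cols (n j) (b j @ eta j) *\<^sub>v u"
    using cocyc_in_span_b_eta[OF j x] by metis
  define u1 where "u1 = vec_slice u 0 (length (b j))"
  define u2 where "u2 = vec_slice u (length (b j)) (length (eta j))"
  have split: "u = u1 @\<^sub>v u2" using u(1) vec_slice_split2 by (simp add: u1_def u2_def)
  have "x = mat_of_cols (n j) (b j) *\<^sub>v u1 + mat_of_cols (n j) (eta j) *\<^sub>v u2"
    unfolding u(2) split by (rule mat_of_cols_append_mult_vec) (simp_all add: u1_def u2_def)
  hence "x - mat_of_cols (n j) (eta j) *\<^sub>v u2 = mat_of_cols (n j) (b j) *\<^sub>v u1"
    by auto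
  moreover have "mat_of_cols (n j) (b j) *\<^sub>v u1 \<in> cobound n D j"
    by (rule mat_of_cols_b_cobound[OF j]) (simp add: u1_def)
  ultimately show "\<exists>c\<in>carrier_vec (length (eta j)). x - mat_of_cols (n j) (eta j) *\<^sub>v c \<in> cobound n D j"
    by (metis u2_def vec_slice_carrier)
qed

lemma coord_cobound:
  assumes j: "j \<le> d" and x: "x \<in> cobound n D j" and i: "length (b j) \<le> i" "i < n j"
  shows "coord j x $ i = 0"
proof -
  obtain u where u: "u \<in> carrier_vec (length (b j))" "x = mat_of_cols (n j) (b j) *\<^sub>v u"
    using cobound_in_span_b[OF j x] by metis
  have "coord j x = u @\<^sub>v 0\<^sub>v (length (eta j)) @\<^sub>v 0\<^sub>v (length (a j))"
    using coord_append3[OF j u(1), of "0\<^sub>v (length (eta j))" "0\<^sub>v (length (a j))"] u by simp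
  thus ?thesis using u(1) i lengths[OF j] by simp
qed

lemma coord_cocyc:
  assumes j: "j \<le> d" and x: "x \<in> cocyc n D d j"
    and i: "length (b j) + length (eta j) \<le> i" "i < n j"
  shows "coord j x $ i = 0"
proof -
  obtain u where u: "u \<in> carrier_vec (length (b j @ eta j))" "x = mat_of_cols (n j) (b j @ eta j) *\<^sub>v u"
    using cocyc_in_span_b_eta[OF j x] by metis
  define u1 where "u1 = vec_slice u 0 (length (b j))"
  define u2 where "u2 = vec_slice u (length (b j)) (length (eta j))"
  have split: "u = u1 @\<^sub>v u2" using u(1) vec_slice_split2 by (simp add: u1_def u2_def)
  have "x = mat_of_cols (n j) (b j) *\<^sub>v u1 + mat_of_cols (n j) (eta j) *\<^sub>v u2"
    unfolding u(2) split by (rule mat_of_cols_append_mult_vec) (simp_all add: u1_def u2_def)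
  hence "coord j x = u1 @\<^sub>v u2 @\<^sub>v 0\<^sub>v (length (a j))"
    using coord_append3[OF j, of u1 u2 "0\<^sub>v (length (a j))"] by (simp add: u1_def u2_def)
  thus ?thesis using i lengths[OF j] by (simp add: u1_def u2_def)
qed

end

definition diag_block :: "'a mat \<Rightarrow> nat \<Rightarrow> nat \<Rightarrow> 'a mat" where
  "diag_block T s k = mat k k (\<lambda>(i, j). T $$ (s + i, s + j))"

lemma dim_diag_block [simp]: "dim_row (diag_block T s k) = k" "dim_col (diag_block T s k) = k"
  by (simp_all add: diag_block_def)

lemma diag_block_carrier [simp]: "diag_block T s k \<in> carrier_mat k k"
  by (simp add: carrier_matI)

lemma diag_block_diag_block: "t + k \<le> m \<Longrightarrow> diag_block (diag_block T s m) t k = diag_block T (s + t) k"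
  by (rule eq_matI) (auto simp: diag_block_def add.assoc)

lemma det_block_upper_triangular:
  fixes T :: "'a::field mat"
  assumes T: "T \<in> carrier_mat (k + l) (k + l)"
    and zero: "\<And>i j. k \<le> i \<Longrightarrow> i < k + l \<Longrightarrow> j < k \<Longrightarrow> T $$ (i, j) = 0"
  shows "det T = det (diag_block T 0 k) * det (diag_block T k l)"
proof -
  have "T = four_block_mat (diag_block T 0 k) (mat k l (\<lambda>(i, j). T $$ (i, k + j))) (0\<^sub>m l k) (diag_block T k l)"
    by (rule eq_matI) (use T zero in \<open>auto simp: diag_block_def\<close>)
  thus ?thesis by (metis det_four_block_mat_lower_left_zero diag_block_carrier mat_carrier)
qed

lemma alt_pow_mult: "alt_pow j (x * y) = alt_pow j x * (alt_pow j y :: 'a::field)"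
  unfolding alt_pow_def by simp

lemma alt_pow_Suc_cancel: "x \<noteq> 0 \<Longrightarrow> alt_pow j x * alt_pow (Suc j) x = (1 :: 'a::field)"
  unfolding alt_pow_def by simp

lemma prod_alt_pow_telescope:
  fixes x y :: "nat \<Rightarrow> 'a::field"
  assumes "x 0 = 1" and "y d = 1" and "\<And>i. i < d \<Longrightarrow> x (Suc i) = y i"
    and "\<And>i. i \<le> d \<Longrightarrow> y i \<noteq> 0"
  shows "(\<Prod>j\<le>d. alt_pow j (x j * y j)) = 1"
proof -
  have "(\<Prod>j\<le>k. alt_pow j (x j * y j)) = alt_pow k (y k)" if "k \<le> d" for k
    using that
  proof (induction k)
    case (Suc k)
    hence "(\<Prod>j\<le>Suc k. alt_pow j (x j * y j))
        = (alt_pow k (y k) * alt_pow (Suc k) (y k)) * alt_pow (Suc k) (y (Suc k))"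
      using assms(3) by (simp add: alt_pow_mult)
    thus ?case using alt_pow_Suc_cancel[OF assms(4)[of k]] Suc by simp
  qed (simp add: assms(1))
  from this[of d] show ?thesis using assms(2) by (simp add: alt_pow_def)
qed

subsection \<open>Changing the adapted basis\<close>

locale phi_basis_pair = A: phi_basis n D d a eta + B: phi_basis n D d a' eta'
  for n :: "nat \<Rightarrow> nat" and D :: "nat \<Rightarrow> 'a::field mat" and d :: nat and a eta a' eta'
begin

lemma length_b_le:
  assumes j: "j \<le> d" shows "length (B.b j) \<le> length (A.b j)"
proof (rule lin_indep_cols_length_le[OF B.b_lin_indep[OF j]], intro ballI)
  fix y assume "y \<in> set (B.b j)"
  hence "y \<in> cobound n D j" using B.b_cobound[OF j] by blast
  then obtain u where "u \<in> carrier_vec (length (A.b j))" "y = mat_of_cols (n j) (A.b j) *\<^sub>v u"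
    by (rule A.cobound_in_span_b[OF j])
  thus "in_span_cols (n j) (A.b j) y" unfolding in_span_cols_def by blast
qed

lemma length_b_eta_le:
  assumes j: "j \<le> d" shows "length (B.b j @ eta' j) \<le> length (A.b j @ eta j)"
proof (rule lin_indep_cols_length_le[OF B.b_eta_lin_indep[OF j]], intro ballI)
  fix y assume "y \<in> set (B.b j @ eta' j)"
  hence "y \<in> cocyc n D d j" using B.b_cocyc[OF j] B.eta_cocyc[OF j] by auto
  then obtain u where "u \<in> carrier_vec (length (A.b j @ eta j))" "y = mat_of_cols (n j) (A.b j @ eta j) *\<^sub>v u"
    by (rule A.cocyc_in_span_b_eta[OF j])
  thus "in_span_cols (n j) (A.b j @ eta j) y" unfolding in_span_cols_def by blast
qed

text \<open>The block sizes are the dimensions of B^j, H^j and A^j, hence independent of the basis.\<close>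

lemma length_b_eq: "j \<le> d \<Longrightarrow> length (B.b j) = length (A.b j)"
  using phi_basis_pair.length_b_le[of n D d a' eta' a eta] length_b_le le_antisym
  by (metis phi_basis_pair_def A.phi_basis_axioms B.phi_basis_axioms)

lemma length_eta_eq: "j \<le> d \<Longrightarrow> length (eta' j) = length (eta j)"
  using phi_basis_pair.length_b_eta_le[of n D d a' eta' a eta] length_b_eta_le length_b_eq le_antisym
  by (metis phi_basis_pair_def A.phi_basis_axioms B.phi_basis_axioms length_append add_left_cancel)

lemma length_a_eq: "j \<le> d \<Longrightarrow> length (a' j) = length (a j)"
  using A.lengths[of j] B.lengths[of j] length_b_eq[of j] length_eta_eq[of j] by simp

abbreviation "cols' j \<equiv> B.b j @ eta' j @ a' j"

definition transition :: "nat \<Rightarrow> 'a mat" where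
  "transition j = mat_of_cols (n j) (map (A.coord j) (cols' j))"

lemma transition_carrier: "j \<le> d \<Longrightarrow> transition j \<in> carrier_mat (n j) (n j)"
  unfolding transition_def using B.cols_length[of j] by (simp add: carrier_matI)

lemma P_change: assumes j: "j \<le> d" shows "B.P j = A.P j * transition j"
proof -
  have c: "set (map (A.coord j) (cols' j)) \<subseteq> carrier_vec (n j)"
    using A.coord(1)[OF j] B.cols_carrier[OF j] by auto
  have "map (\<lambda>c. A.P j *\<^sub>v c) (map (A.coord j) (cols' j)) = cols' j"
    unfolding map_map by (rule map_idI) (use A.coord(2)[OF j] B.cols_carrier[OF j] in auto)
  thus ?thesis unfolding transition_def phi_mat_def
    by (metis mat_of_cols_map_mult[OF A.P_carrier[OF j] c] phi_mat_def)
qed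

lemma det_P_change: "j \<le> d \<Longrightarrow> det (B.P j) = det (A.P j) * det (transition j)"
  using P_change det_mult[OF A.P_carrier transition_carrier] by simp

lemma transition_index:
  assumes "j \<le> d" "i < n j" "k < n j"
  shows "transition j $$ (i, k) = A.coord j (cols' j ! k) $ i"
proof -
  have "k < length (map (A.coord j) (cols' j))" using assms B.cols_length[of j] by simp
  thus ?thesis unfolding transition_def using assms(2) by (subst mat_of_cols_index) (simp_all del: map_append)
qed

definition blk_b :: "nat \<Rightarrow> 'a mat" where "blk_b j = diag_block (transition j) 0 (length (A.b j))"
definition blk_eta :: "nat \<Rightarrow> 'a mat" where
  "blk_eta j = diag_block (transition j) (length (A.b j)) (length (eta j))"
definition blk_a :: "nat \<Rightarrow> 'a mat" where
  "blk_a j = diag_block (transition j) (length (A.b j) + length (eta j)) (length (a j))"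

text \<open>The new B-vectors are coboundaries and the new B- and H-vectors are cocycles, so
  the transition matrix is block upper triangular.\<close>

lemma det_transition:
  assumes j: "j \<le> d" shows "det (transition j) = det (blk_b j) * det (blk_eta j) * det (blk_a j)"
proof -
  let ?b = "length (A.b j)" and ?h = "length (eta j)" and ?a = "length (a j)"
  have nj: "n j = (?b + ?h) + ?a" using A.lengths[OF j] by simp
  have zero_b: "transition j $$ (i, k) = 0" if "?b \<le> i" "i < n j" "k < ?b" for i k
  proof -
    have k': "k < length (B.b j)" using that length_b_eq[OF j] by simp
    hence "cols' j ! k = B.b j ! k" by (simp add: nth_append)
    moreover have "B.b j ! k \<in> cobound n D j" using B.b_cobound[OF j] nth_mem[OF k'] by blast
    ultimately have "cols' j ! k \<in> cobound n D j" by simp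
    thus ?thesis using transition_index[OF j] A.coord_cobound[OF j] that nj by simp
  qed
  have zero_bh: "transition j $$ (i, k) = 0" if "?b + ?h \<le> i" "i < n j" "k < ?b + ?h" for i k
  proof -
    have k': "k < length (B.b j @ eta' j)" using that length_b_eq[OF j] length_eta_eq[OF j] by simp
    hence "cols' j ! k = (B.b j @ eta' j) ! k" by (metis append_assoc nth_append_left)
    hence "cols' j ! k \<in> cocyc n D d j" using nth_mem[OF k'] B.b_cocyc[OF j] B.eta_cocyc[OF j] by auto
    thus ?thesis using transition_index[OF j] A.coord_cocyc[OF j] that nj by simp
  qed
  have "det (transition j) = det (diag_block (transition j) 0 (?b + ?h)) * det (blk_a j)"
    unfolding blk_a_def by (rule det_block_upper_triangular) (use transition_carrier[OF j] nj zero_bh in auto)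
  also have "det (diag_block (transition j) 0 (?b + ?h))
      = det (diag_block (diag_block (transition j) 0 (?b + ?h)) 0 ?b)
      * det (diag_block (diag_block (transition j) 0 (?b + ?h)) ?b ?h)"
    by (rule det_block_upper_triangular) (use zero_b nj in \<open>auto simp: diag_block_def\<close>)
  also have "\<dots> = det (blk_b j) * det (blk_eta j)"
    unfolding blk_b_def blk_eta_def by (simp add: diag_block_diag_block)
  finally show ?thesis .
qed

lemma det_transition_nonzero: "j \<le> d \<Longrightarrow> det (transition j) \<noteq> 0"
  using det_P_change B.det_P_nonzero by fastforce

lemma det_blk_b_0: "det (blk_b 0) = 1"
  unfolding blk_b_def by (simp add: dprev_def)

lemma det_blk_a_top: "det (blk_a d) = 1"
  unfolding blk_a_def using A.a_top by simp

text \<open>The differential carries the A-block of degree i onto the B-block of degree i+1.\<close>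

lemma blk_b_Suc: assumes i: "i < d" shows "blk_b (Suc i) = blk_a i"
proof (rule eq_matI)
  have i': "i \<le> d" and si: "Suc i \<le> d" using i by auto
  have bs: "length (A.b (Suc i)) = length (a i)" by (simp add: dprev_def)
  fix p k assume "p < dim_row (blk_a i)" "k < dim_col (blk_a i)"
  hence p: "p < length (a i)" and k: "k < length (a i)" unfolding blk_a_def by auto
  let ?s = "length (A.b i) + length (eta i)"
  have k': "k < length (a' i)" using k length_a_eq[OF i'] by simp
  define c where "c = A.coord i (a' i ! k)"
  have "a' i ! k \<in> carrier_vec (n i)" using B.a_carrier[OF i'] k' by auto
  hence c: "c \<in> carrier_vec (n i)" "A.P i *\<^sub>v c = a' i ! k"
    using A.coord[OF i'] unfolding c_def by auto
  have "B.b (Suc i) ! k = D i *\<^sub>v (A.P i *\<^sub>v c)" using k' c(2) by (simp add: dprev_def)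
  also have "\<dots> = mat_of_cols (n (Suc i)) (A.b (Suc i)) *\<^sub>v vec_slice c ?s (length (a i))"
    by (rule A.diff_P_mult_vec[OF i c(1)])
  finally have "A.coord (Suc i) (B.b (Suc i) ! k)
      = vec_slice c ?s (length (a i)) @\<^sub>v 0\<^sub>v (length (eta (Suc i))) @\<^sub>v 0\<^sub>v (length (a (Suc i)))"
    using A.coord_append3[OF si _ zero_carrier_vec zero_carrier_vec, of "vec_slice c ?s (length (a i))"] bs
    by simp
  moreover have "cols' (Suc i) ! k = B.b (Suc i) ! k" using k' by (simp add: dprev_def nth_append)
  moreover have "cols' i ! (?s + k) = a' i ! k"
    using length_b_eq[OF i'] length_eta_eq[OF i'] by (simp add: nth_append)
  moreover have "length (a i) \<le> n (Suc i)" using A.lengths[OF si] bs by simp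
  ultimately show "blk_b (Suc i) $$ (p, k) = blk_a i $$ (p, k)"
    using p k bs A.lengths[OF i'] transition_index[OF si, of p k] transition_index[OF i', of "?s + p" "?s + k"]
    by (simp add: blk_b_def blk_a_def diag_block_def c_def vec_slice_def)
qed (simp_all add: blk_b_def blk_a_def dprev_def)

lemma eta'_in_eta_mod_cobound:
  assumes j: "j \<le> d" and i: "i < length (eta j)"
  shows "eta' j ! i - mat_of_cols (n j) (eta j) *\<^sub>v row (transpose_mat (blk_eta j)) i \<in> cobound n D j"
proof -
  let ?b = "length (A.b j)" and ?h = "length (eta j)" and ?a = "length (a j)"
  have i': "i < length (eta' j)" using i length_eta_eq[OF j] by simp
  have x: "eta' j ! i \<in> cocyc n D d j" using B.eta_cocyc[OF j] nth_mem[OF i'] by auto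
  define c where "c = A.coord j (eta' j ! i)"
  have c: "c \<in> carrier_vec (n j)" "A.P j *\<^sub>v c = eta' j ! i"
    using A.coord[OF j] x A.cocyc_carrier unfolding c_def by auto
  have nj: "n j = ?b + ?h + ?a" using A.lengths[OF j] by simp
  have "row (transpose_mat (blk_eta j)) i = vec_slice c ?b ?h"
  proof (rule eq_vecI)
    fix k assume "k < dim_vec (vec_slice c ?b ?h)"
    hence k: "k < ?h" by simp
    have "cols' j ! (?b + i) = eta' j ! i" using length_b_eq[OF j] i' by (simp add: nth_append)
    thus "row (transpose_mat (blk_eta j)) i $ k = vec_slice c ?b ?h $ k"
      using i k nj transition_index[OF j, of "?b + k" "?b + i"]
      by (simp add: blk_eta_def diag_block_def vec_slice_def c_def)
  qed (simp add: blk_eta_def)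
  moreover have "vec_slice c (?b + ?h) ?a = 0\<^sub>v ?a"
    using A.coord_cocyc[OF j x] nj by (intro eq_vecI) (simp_all add: vec_slice_def c_def)
  ultimately have "eta' j ! i - mat_of_cols (n j) (eta j) *\<^sub>v row (transpose_mat (blk_eta j)) i
      = mat_of_cols (n j) (A.b j) *\<^sub>v vec_slice c 0 ?b"
    using A.P_mult_vec_slices[OF j c(1)] c(2) by auto
  thus ?thesis using A.mat_of_cols_b_cobound[OF j] by simp
qed

theorem rho_rep_detH_eq:
  assumes "d = 2 * r - 1"
  shows "detH_eq n D d (rho_rep n D Gam r (a, eta)) (rho_rep n D Gam r (a', eta'))"
proof -
  let ?c = "\<lambda>j. det (c_mat n Gam r j)"
  let ?M = "\<lambda>j. transpose_mat (blk_eta j)"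
  have N_exp_eq: "N_exp a' d = N_exp a d"
    unfolding N_exp_def using length_a_eq by (intro arg_cong[where f = "\<lambda>x. x div 2"] sum.cong) auto
  have det_M: "det (?M j) = det (blk_eta j)" for j
    using det_transpose[of "blk_eta j" "length (eta j)"] by (simp add: blk_eta_def)
  have tel: "(\<Prod>j\<le>d. alt_pow j (det (blk_b j) * det (blk_a j))) = 1"
    by (rule prod_alt_pow_telescope)
      (use det_blk_b_0 det_blk_a_top blk_b_Suc det_transition det_transition_nonzero in auto)
  have "(\<Prod>j\<le>d. alt_pow j (?c j / det (A.P j)))
      = (\<Prod>j\<le>d. alt_pow j (?c j / det (B.P j)) * alt_pow j (det (?M j))
           * alt_pow j (det (blk_b j) * det (blk_a j)))"
  proof (rule prod.cong[OF refl])
    fix j assume "j \<in> {..d}"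
    hence "det (B.P j) = det (A.P j) * (det (blk_b j) * det (?M j) * det (blk_a j))"
      "det (B.P j) \<noteq> 0"
      using det_P_change det_transition det_M B.det_P_nonzero by auto
    thus "alt_pow j (?c j / det (A.P j)) = alt_pow j (?c j / det (B.P j)) * alt_pow j (det (?M j))
           * alt_pow j (det (blk_b j) * det (blk_a j))"
      by (simp add: alt_pow_mult[symmetric] field_simps)
  qed
  also have "\<dots> = (\<Prod>j\<le>d. alt_pow j (?c j / det (B.P j))) * (\<Prod>j\<le>d. alt_pow j (det (?M j)))"
    using tel by (simp add: prod.distrib)
  finally have prod_eq: "(\<Prod>j\<le>d. alt_pow j (?c j / det (A.P j)))
      = (\<Prod>j\<le>d. alt_pow j (?c j / det (B.P j))) * (\<Prod>j\<le>d. alt_pow j (det (?M j)))" .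
  show ?thesis
    unfolding detH_eq_def detH_rep_def rho_rep_def Let_def assms[symmetric] fst_conv snd_conv
    using A.cohom_basis_eta B.cohom_basis_eta length_eta_eq eta'_in_eta_mod_cobound prod_eq N_exp_eq
    by (intro conjI allI impI exI[of _ ?M]) (auto simp: blk_eta_def mult.assoc)
qed

end

subsection \<open>Existence of adapted bases\<close>

definition basis_ext :: "nat \<Rightarrow> 'a::field vec set \<Rightarrow> 'a vec list \<Rightarrow> 'a vec list" where
  "basis_ext n S L =
     (SOME e. set e \<subseteq> S \<and> lin_indep_cols n (L @ e) \<and> (\<forall>x \<in> S. in_span_cols n (L @ e) x))"

lemma basis_ext:
  assumes "S \<subseteq> carrier_vec n" "lin_indep_cols n L"
  shows "set (basis_ext n S L) \<subseteq> S" "lin_indep_cols n (L @ basis_ext n S L)"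
    "\<forall>x \<in> S. in_span_cols n (L @ basis_ext n S L) x"
proof -
  obtain e where "set e \<subseteq> S" "lin_indep_cols n (L @ e)" "\<forall>x \<in> S. in_span_cols n (L @ e) x"
    by (rule lin_indep_cols_extend[OF assms])
  hence "\<exists>e. set e \<subseteq> S \<and> lin_indep_cols n (L @ e) \<and> (\<forall>x \<in> S. in_span_cols n (L @ e) x)" by blast
  from someI_ex[OF this] show "set (basis_ext n S L) \<subseteq> S" "lin_indep_cols n (L @ basis_ext n S L)"
    "\<forall>x \<in> S. in_span_cols n (L @ basis_ext n S L) x"
    unfolding basis_ext_def by blast+
qed

context cochain_complex
begin

lemma lin_indep_cols_diff_image:
  assumes j: "j < d" and A: "set A \<subseteq> carrier_vec (n j)" and ind: "lin_indep_cols (n j) (L @ A)"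
    and span: "\<forall>x \<in> cocyc n D d j. in_span_cols (n j) L x"
  shows "lin_indep_cols (n (Suc j)) (map (\<lambda>v. D j *\<^sub>v v) A)"
  unfolding lin_indep_cols_def
proof (intro ballI impI)
  fix c assume c: "c \<in> carrier_vec (length (map (\<lambda>v. D j *\<^sub>v v) A))"
    and z: "mat_of_cols (n (Suc j)) (map (\<lambda>v. D j *\<^sub>v v) A) *\<^sub>v c = 0\<^sub>v (n (Suc j))"
  have c': "c \<in> carrier_vec (length A)" using c by simp
  have "D j *\<^sub>v (mat_of_cols (n j) A *\<^sub>v c) = 0\<^sub>v (n (Suc j))"
    using z mult_mat_vec_mat_of_cols[OF diff_carrier[OF j] A c'] by simp
  hence "mat_of_cols (n j) A *\<^sub>v c \<in> cocyc n D d j" unfolding mem_cocyc_iff by simp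
  then obtain c' where c'': "c' \<in> carrier_vec (length L)" "mat_of_cols (n j) A *\<^sub>v c = mat_of_cols (n j) L *\<^sub>v c'"
    using span unfolding in_span_cols_def by auto
  have "c' @\<^sub>v 0\<^sub>v (length A) \<in> carrier_vec (length (L @ A))"
    "0\<^sub>v (length L) @\<^sub>v c \<in> carrier_vec (length (L @ A))"
    using c' c''(1) by auto
  moreover have "mat_of_cols (n j) (L @ A) *\<^sub>v (c' @\<^sub>v 0\<^sub>v (length A))
      = mat_of_cols (n j) (L @ A) *\<^sub>v (0\<^sub>v (length L) @\<^sub>v c)"
    using c' c'' by (simp add: mat_of_cols_append_mult_vec)
  ultimately have "c' @\<^sub>v 0\<^sub>v (length A) = 0\<^sub>v (length L) @\<^sub>v c"
    by (rule lin_indep_cols_coeffs_unique[OF ind])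
  thus "c = 0\<^sub>v (length (map (\<lambda>v. D j *\<^sub>v v) A))"
    using append_vec_eq[OF c''(1) zero_carrier_vec] by simp
qed

definition eta_ext :: "nat \<Rightarrow> 'a vec list \<Rightarrow> 'a vec list" where
  "eta_ext j L = basis_ext (n j) (cocyc n D d j) L"

definition a_ext :: "nat \<Rightarrow> 'a vec list \<Rightarrow> 'a vec list" where
  "a_ext j L = (if j < d then basis_ext (n j) (carrier_vec (n j)) (L @ eta_ext j L) else [])"

primrec std_a :: "nat \<Rightarrow> 'a vec list" where
  "std_a 0 = a_ext 0 []"
| "std_a (Suc j) = a_ext (Suc j) (map (\<lambda>v. D j *\<^sub>v v) (std_a j))"

definition std_eta :: "nat \<Rightarrow> 'a vec list" where
  "std_eta j = eta_ext j (dprev D std_a j)"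

lemma std_a_eq: "std_a j = a_ext j (dprev D std_a j)"
  by (cases j) (simp_all add: dprev_def)

lemma std_basis:
  assumes j: "j \<le> d" and L: "set (dprev D std_a j) \<subseteq> cocyc n D d j" "lin_indep_cols (n j) (dprev D std_a j)"
  shows "set (std_eta j) \<subseteq> cocyc n D d j" "set (std_a j) \<subseteq> carrier_vec (n j)"
    "lin_indep_cols (n j) (dprev D std_a j @ std_eta j @ std_a j)"
    "\<forall>x \<in> carrier_vec (n j). in_span_cols (n j) (dprev D std_a j @ std_eta j @ std_a j) x"
    "\<forall>x \<in> cocyc n D d j. in_span_cols (n j) (dprev D std_a j @ std_eta j) x"
proof -
  let ?L = "dprev D std_a j"
  note eta = basis_ext[OF cocyc_carrier L(2), folded eta_ext_def std_eta_def]
  show "set (std_eta j) \<subseteq> cocyc n D d j" "\<forall>x \<in> cocyc n D d j. in_span_cols (n j) (?L @ std_eta j) x"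
    using eta by auto
  have "set (std_a j) \<subseteq> carrier_vec (n j) \<and> lin_indep_cols (n j) (?L @ std_eta j @ std_a j) \<and>
      (\<forall>x \<in> carrier_vec (n j). in_span_cols (n j) (?L @ std_eta j @ std_a j) x)"
  proof (cases "j < d")
    case True
    with basis_ext[OF subset_refl eta(2)] show ?thesis
      by (simp add: std_a_eq[of j] a_ext_def std_eta_def)
  next
    case False
    hence "j = d" "std_a j = []" using j std_a_eq[of j] by (simp_all add: a_ext_def)
    thus ?thesis using eta cocyc_top by simp
  qed
  thus "set (std_a j) \<subseteq> carrier_vec (n j)" "lin_indep_cols (n j) (?L @ std_eta j @ std_a j)"
    "\<forall>x \<in> carrier_vec (n j). in_span_cols (n j) (?L @ std_eta j @ std_a j) x"
    by blast+
qed

lemma dprev_std_a: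
  "j \<le> d \<Longrightarrow> set (dprev D std_a j) \<subseteq> cocyc n D d j \<and> lin_indep_cols (n j) (dprev D std_a j)"
proof (induction j)
  case 0
  thus ?case by (simp add: dprev_def lin_indep_cols_Nil)
next
  case (Suc j)
  hence j: "j < d" by simp
  have IH: "set (dprev D std_a j) \<subseteq> cocyc n D d j" "lin_indep_cols (n j) (dprev D std_a j)"
    using Suc.IH j by simp_all
  note std = std_basis[OF less_imp_le[OF j] IH]
  have "set (dprev D std_a (Suc j)) \<subseteq> cobound n D (Suc j)"
    using std(2) by (auto simp: dprev_def cobound_def)
  moreover have "lin_indep_cols (n (Suc j)) (map (\<lambda>v. D j *\<^sub>v v) (std_a j))"
  proof (rule lin_indep_cols_diff_image[OF j std(2)])
    show "lin_indep_cols (n j) ((dprev D std_a j @ std_eta j) @ std_a j)" using std(3) by simp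
  qed (fact std(5))
  ultimately show ?case using cobound_subset_cocyc[OF Suc.prems] by (auto simp: dprev_def)
qed

theorem exists_phi_datum: "\<exists>ae. phi_datum n D d ae"
proof (intro exI[of _ "(std_a, std_eta)"])
  show "phi_datum n D d (std_a, std_eta)"
    unfolding phi_datum_def fst_conv snd_conv
  proof (intro conjI allI impI)
    fix j assume j: "j \<le> d"
    note std = std_basis[OF j dprev_std_a[OF j, THEN conjunct1] dprev_std_a[OF j, THEN conjunct2]]
    have len: "length (dprev D std_a j @ std_eta j @ std_a j) = n j"
      by (rule spanning_lin_indep_cols_length[OF std(3,4)])
    show "set (std_a j) \<subseteq> carrier_vec (n j)" "set (std_eta j) \<subseteq> cocyc n D d j" by (fact std(2), fact std(1))
    show "length (dprev D std_a j) + length (std_eta j) + length (std_a j) = n j" using len by simp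
    show "det (phi_mat n D std_a std_eta j) \<noteq> 0"
      using lin_indep_cols_iff_det_nonzero[OF len] std(3) unfolding phi_mat_def by simp
  next
    show "std_a d = []" using std_a_eq[of d] by (simp add: a_ext_def)
  qed
qed

end

subsection \<open>Sign bookkeeping\<close>

lemma sum_atMost_shift:
  fixes bx x :: "nat \<Rightarrow> nat"
  assumes "bx 0 = 0" "\<And>j. bx (Suc j) = x j"
  shows "(\<Sum>k\<le>d. bx k) = (\<Sum>k<d. x k)"
  using assms by (induction d) auto

lemma sum_lower_triangle_atMost_Suc:
  "(\<Sum>j\<le>Suc d. \<Sum>k<j. f j * g k) = (\<Sum>j\<le>d. \<Sum>k<j. f j * g k) + f (Suc d) * (\<Sum>k\<le>d. g k)"
  for f g :: "nat \<Rightarrow> nat"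
  by (simp add: lessThan_Suc_atMost sum_distrib_left)

text \<open>In the parity lemmas below, x j, h j and bx j = x (j - 1) stand for the dimensions of
  A^j, H^j and B^j of one complex, and y j, g j and bw j for those of the other.\<close>

lemma even_fusion_sign_exponent:
  fixes x y h g bx bw :: "nat \<Rightarrow> nat"
  assumes bx0: "bx 0 = 0" and bxS: "\<And>j. bx (Suc j) = x j"
    and by0: "bw 0 = 0" and byS: "\<And>j. bw (Suc j) = y j"
  shows "even ((\<Sum>j\<le>d. \<Sum>k<j. (bx j + h j + x j) * (bw k + g k + y k)) + (\<Sum>j\<le>d. \<Sum>k<j. h j * g k)
     + (\<Sum>j\<le>d. x j * y j) + (\<Sum>j\<le>d. bw j * (h j + x j) + g j * x j)
     + x d * (\<Sum>k\<le>d. bw k + g k + y k))"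
proof (induction d)
  case 0
  show ?case by (rule dvdI[of _ _ "x 0 * y 0 + g 0 * x 0"]) (simp add: algebra_simps by0)
next
  case (Suc d)
  define nn where "nn j = bx j + h j + x j" for j
  define mm where "mm j = bw j + g j + y j" for j
  define M where "M = (\<Sum>k\<le>d. mm k)"
  define G where "G = (\<Sum>k\<le>d. g k)"
  define Y where "Y = (\<Sum>k<d. y k)"
  define S1 where "S1 = (\<Sum>j\<le>d. \<Sum>k<j. nn j * mm k)"
  define Hg where "Hg = (\<Sum>j\<le>d. \<Sum>k<j. h j * g k)"
  define XY where "XY = (\<Sum>j\<le>d. x j * y j)"
  define Sb where "Sb = (\<Sum>j\<le>d. bw j * (h j + x j) + g j * x j)"
  have IH: "even (S1 + Hg + XY + Sb + x d * M)"
    using Suc.IH unfolding S1_def Hg_def XY_def Sb_def M_def nn_def mm_def .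
  have MY: "M = G + y d + 2 * Y"
  proof -
    have "M = (\<Sum>k\<le>d. bw k) + G + (\<Sum>k\<le>d. y k)" unfolding M_def mm_def G_def by (simp add: sum.distrib)
    also have "(\<Sum>k\<le>d. bw k) = Y" unfolding Y_def by (rule sum_atMost_shift[OF by0 byS])
    also have "(\<Sum>k\<le>d. y k) = Y + y d" unfolding Y_def by (simp add: lessThan_Suc_atMost[symmetric])
    finally show ?thesis by simp
  qed
  have nS: "nn (Suc d) = x d + h (Suc d) + x (Suc d)" unfolding nn_def using bxS by simp
  have mS: "mm (Suc d) = y d + g (Suc d) + y (Suc d)" unfolding mm_def using byS by simp
  have E1: "(\<Sum>j\<le>Suc d. \<Sum>k<j. nn j * mm k) = S1 + nn (Suc d) * M"
    unfolding S1_def M_def by (rule sum_lower_triangle_atMost_Suc)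
  have E2: "(\<Sum>j\<le>Suc d. \<Sum>k<j. h j * g k) = Hg + h (Suc d) * G"
    unfolding Hg_def G_def by (rule sum_lower_triangle_atMost_Suc)
  have E3: "(\<Sum>j\<le>Suc d. x j * y j) = XY + x (Suc d) * y (Suc d)" unfolding XY_def by simp
  have E4: "(\<Sum>j\<le>Suc d. bw j * (h j + x j) + g j * x j) = Sb + (y d * (h (Suc d) + x (Suc d)) + g (Suc d) * x (Suc d))"
    unfolding Sb_def using byS by simp
  have E5: "(\<Sum>k\<le>Suc d. mm k) = M + mm (Suc d)" unfolding M_def by simp
  let ?T = "(\<Sum>j\<le>Suc d. \<Sum>k<j. nn j * mm k) + (\<Sum>j\<le>Suc d. \<Sum>k<j. h j * g k)
     + (\<Sum>j\<le>Suc d. x j * y j) + (\<Sum>j\<le>Suc d. bw j * (h j + x j) + g j * x j)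
     + x (Suc d) * (\<Sum>k\<le>Suc d. mm k)"
  have key: "?T + 2 * (x d * M) = (S1 + Hg + XY + Sb + x d * M) + 2 * (x d * M + x (Suc d) * M + x (Suc d) * y (Suc d)
      + y d * x (Suc d) + g (Suc d) * x (Suc d) + h (Suc d) * G + h (Suc d) * y d + h (Suc d) * Y)"
    unfolding E1 E2 E3 E4 E5 nS mS MY by (simp add: algebra_simps)
  have "even (?T + 2 * (x d * M))" unfolding key by (rule dvd_add[OF IH dvd_triv_left])
  hence "even ?T" by (simp only: dvd_add_left_iff[OF dvd_triv_left])
  thus ?case unfolding nn_def mm_def .
qed

lemma sum_mult_sum_triangles:
  fixes f g :: "nat \<Rightarrow> nat"
  shows "(\<Sum>j<N. f j) * (\<Sum>j<N. g j) = (\<Sum>j<N. f j * g j) + (\<Sum>j<N. \<Sum>k<j. f j * g k) + (\<Sum>j<N. \<Sum>k<j. f k * g j)"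
proof (induction N)
  case 0 thus ?case by simp
next
  case (Suc N)
  have "(\<Sum>j<Suc N. f j) * (\<Sum>j<Suc N. g j) = ((\<Sum>j<N. f j) + f N) * ((\<Sum>j<N. g j) + g N)" by simp
  also have "\<dots> = (\<Sum>j<N. f j) * (\<Sum>j<N. g j) + f N * (\<Sum>j<N. g j) + (\<Sum>j<N. f j) * g N + f N * g N"
    by (simp add: algebra_simps)
  also have "\<dots> = (\<Sum>j<Suc N. f j * g j) + (\<Sum>j<Suc N. \<Sum>k<j. f j * g k) + (\<Sum>j<Suc N. \<Sum>k<j. f k * g j)"
    unfolding Suc.IH by (simp add: sum_distrib_left sum_distrib_right algebra_simps)
  finally show ?case .
qed

lemma sum_lessThan_double_palindromic:
  fixes f :: "nat \<Rightarrow> nat"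
  assumes sym: "\<And>j. j < 2 * r \<Longrightarrow> f (2 * r - 1 - j) = f j"
  shows "(\<Sum>j<2 * r. f j) = 2 * (\<Sum>j<r. f j)"
proof -
  have "(\<Sum>j<2 * r. f j) = (\<Sum>j<r + r. f j)" by (simp add: mult_2)
  also have "\<dots> = (\<Sum>j<r. f j) + (\<Sum>j<r. f (r + j))" by (rule sum_lessThan_add)
  also have "(\<Sum>j<r. f (r + j)) = (\<Sum>j<r. f (r - Suc j))"
  proof (rule sum.cong[OF refl])
    fix j assume "j \<in> {..<r}"
    hence j: "j < r" by simp
    have "f (2 * r - 1 - (r + j)) = f (r + j)" using sym[of "r + j"] j by simp
    moreover have "2 * r - 1 - (r + j) = r - Suc j" using j by simp
    ultimately show "f (r + j) = f (r - Suc j)" by simp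
  qed
  also have "\<dots> = (\<Sum>j<r. f j)" by (rule sum.nat_diff_reindex)
  finally show ?thesis by simp
qed

lemma sum_lower_triangle_reflect:
  fixes f g :: "nat \<Rightarrow> nat"
  assumes sf: "\<And>j. j < N \<Longrightarrow> f (N - 1 - j) = f j" and sg: "\<And>j. j < N \<Longrightarrow> g (N - 1 - j) = g j"
  shows "(\<Sum>j<N. \<Sum>k<j. f j * g k) = (\<Sum>j<N. \<Sum>k<j. f k * g j)"
proof -
  define P where "P = Sigma {..<N} (\<lambda>j. {..<j})"
  have fin: "finite P" unfolding P_def by auto
  have e1: "(\<Sum>j<N. \<Sum>k<j. f j * g k) = (\<Sum>p\<in>P. f (fst p) * g (snd p))"
    unfolding P_def by (subst sum.Sigma) (auto simp: case_prod_beta)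
  have e2: "(\<Sum>j<N. \<Sum>k<j. f k * g j) = (\<Sum>p\<in>P. f (snd p) * g (fst p))"
    unfolding P_def by (subst sum.Sigma) (auto simp: case_prod_beta)
  define s where "s = (\<lambda>p::nat \<times> nat. (N - 1 - snd p, N - 1 - fst p))"
  have "(\<Sum>p\<in>P. f (fst p) * g (snd p)) = (\<Sum>p\<in>P. f (snd p) * g (fst p))"
  proof (rule sum.reindex_bij_witness[where i = s and j = s])
    fix p assume "p \<in> P" thus "s (s p) = p" unfolding P_def s_def by (cases p) auto
  next
    fix p assume "p \<in> P" thus "s p \<in> P" unfolding P_def s_def by (cases p) auto
  next
    fix p assume "p \<in> P" thus "s (s p) = p" unfolding P_def s_def by (cases p) auto
  next
    fix p assume "p \<in> P" thus "s p \<in> P" unfolding P_def s_def by (cases p) auto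
  next
    fix p assume p: "p \<in> P"
    obtain j k where jk: "p = (j, k)" by (cases p)
    have "k < j" "j < N" using p jk unfolding P_def by auto
    thus "f (snd (s p)) * g (fst (s p)) = f (fst p) * g (snd p)"
      unfolding s_def jk using sf[of j] sg[of k] by simp
  qed
  thus ?thesis using e1 e2 by simp
qed

lemma even_half_diag_plus_triangle:
  fixes f g :: "nat \<Rightarrow> nat"
  assumes d: "d = 2 * r - 1" "1 \<le> r"
    and sf: "\<And>j. j \<le> d \<Longrightarrow> f (d - j) = f j" and sg: "\<And>j. j \<le> d \<Longrightarrow> g (d - j) = g j"
  shows "even ((\<Sum>j<r. f j * g j) + (\<Sum>j\<le>d. \<Sum>k<j. f j * g k))"
proof -
  let ?N = "2 * r"
  have N: "{..d} = {..<?N}" using d by auto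
  have sf': "f (?N - 1 - j) = f j" and sg': "g (?N - 1 - j) = g j" if "j < ?N" for j
    using sf[of j] sg[of j] that d by simp_all
  have "(\<Sum>j<?N. f j) = 2 * (\<Sum>j<r. f j)" by (rule sum_lessThan_double_palindromic) (rule sf')
  moreover have "(\<Sum>j<?N. g j) = 2 * (\<Sum>j<r. g j)" by (rule sum_lessThan_double_palindromic) (rule sg')
  moreover have "(\<Sum>j<?N. f j * g j) = 2 * (\<Sum>j<r. f j * g j)"
    by (rule sum_lessThan_double_palindromic) (metis sf' sg')
  moreover have "(\<Sum>j<?N. \<Sum>k<j. f j * g k) = (\<Sum>j<?N. \<Sum>k<j. f k * g j)"
    using sf' sg' by (rule sum_lower_triangle_reflect)
  ultimately have "2 * (\<Sum>j<r. f j) * (2 * (\<Sum>j<r. g j))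
      = 2 * (\<Sum>j<r. f j * g j) + 2 * (\<Sum>j<?N. \<Sum>k<j. f j * g k)"
    using sum_mult_sum_triangles[of f ?N g] by simp
  hence "(\<Sum>j<r. f j * g j) + (\<Sum>j<?N. \<Sum>k<j. f j * g k) = 2 * ((\<Sum>j<r. f j) * (\<Sum>j<r. g j))"
    by (simp add: algebra_simps)
  thus ?thesis unfolding N by simp
qed

lemma even_dsum_sign_exponent:
  fixes x y h g bx bw nf mf :: "nat \<Rightarrow> nat" and r d :: nat
  assumes bx0: "bx 0 = 0" and bxS: "\<And>j. bx (Suc j) = x j"
    and bw0: "bw 0 = 0" and bwS: "\<And>j. bw (Suc j) = y j"
    and xd: "x d = 0" and dr: "d = 2 * r - 1" and r1: "r \<ge> 1"
    and nf: "\<And>j. j \<le> d \<Longrightarrow> nf j = bx j + h j + x j"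
    and mf: "\<And>j. j \<le> d \<Longrightarrow> mf j = bw j + g j + y j"
    and snf: "\<And>j. j \<le> d \<Longrightarrow> nf (d - j) = nf j"
    and smf: "\<And>j. j \<le> d \<Longrightarrow> mf (d - j) = mf j"
  shows "even ((\<Sum>j<r. nf j * mf j) + (\<Sum>j\<le>d. x j * y j)
    + (\<Sum>j\<le>d. bw j * (h j + g j + x j + y j) + g j * (x j + y j + bw j) + y j * (bw j + g j))
    + (\<Sum>j\<le>d. \<Sum>k<j. h j * g k))"
proof -
  define S1 where "S1 = (\<Sum>j\<le>d. \<Sum>k<j. nf j * mf k)"
  define Hg where "Hg = (\<Sum>j\<le>d. \<Sum>k<j. h j * g k)"
  define XY where "XY = (\<Sum>j\<le>d. x j * y j)"
  define Sb where "Sb = (\<Sum>j\<le>d. bw j * (h j + x j) + g j * x j)"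
  define K where "K = (\<Sum>j\<le>d. bw j * g j + bw j * y j + g j * y j)"
  define R where "R = (\<Sum>j<r. nf j * mf j)"
  have A: "even (S1 + Hg + XY + Sb)"
  proof -
    have "even ((\<Sum>j\<le>d. \<Sum>k<j. (bx j + h j + x j) * (bw k + g k + y k)) + Hg + XY + Sb
       + x d * (\<Sum>k\<le>d. bw k + g k + y k))"
      unfolding Hg_def XY_def Sb_def by (rule even_fusion_sign_exponent[OF bx0 bxS bw0 bwS])
    moreover have "(\<Sum>j\<le>d. \<Sum>k<j. (bx j + h j + x j) * (bw k + g k + y k)) = S1"
      unfolding S1_def by (intro sum.cong refl) (simp add: nf mf)
    ultimately show ?thesis using xd by simp
  qed
  have C: "even (R + S1)"
    unfolding R_def S1_def by (rule even_half_diag_plus_triangle[of d r nf mf, OF dr r1 snf smf])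
  have E: "(\<Sum>j\<le>d. bw j * (h j + g j + x j + y j) + g j * (x j + y j + bw j) + y j * (bw j + g j)) = Sb + 2 * K"
  proof -
    have "(\<Sum>j\<le>d. bw j * (h j + g j + x j + y j) + g j * (x j + y j + bw j) + y j * (bw j + g j))
        = (\<Sum>j\<le>d. (bw j * (h j + x j) + g j * x j) + 2 * (bw j * g j + bw j * y j + g j * y j))"
      by (intro sum.cong refl) (simp add: algebra_simps)
    also have "\<dots> = Sb + 2 * K" unfolding Sb_def K_def by (simp only: sum.distrib sum_distrib_left[symmetric])
    finally show ?thesis .
  qed
  have "even (R + XY + (Sb + 2 * K) + Hg)" using A C by presburger
  thus ?thesis unfolding E[symmetric] R_def XY_def Hg_def .
qed

lemma half_sum_quadratic_add:
  fixes F :: "nat \<Rightarrow> nat \<Rightarrow> nat" and p q :: "nat \<Rightarrow> nat"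
  assumes add: "\<And>j u v. F j (u + v) = F j u + F j v + 2 * (u * v)"
    and ev: "\<And>j u. even (F j u)" and fin: "finite I"
  shows "(\<Sum>j\<in>I. F j (p j + q j)) div 2 = (\<Sum>j\<in>I. F j (p j)) div 2 + (\<Sum>j\<in>I. F j (q j)) div 2 + (\<Sum>j\<in>I. p j * q j)"
proof -
  have s: "(\<Sum>j\<in>I. F j (p j + q j)) = (\<Sum>j\<in>I. F j (p j)) + (\<Sum>j\<in>I. F j (q j)) + 2 * (\<Sum>j\<in>I. p j * q j)"
    by (simp add: add sum.distrib sum_distrib_left)
  have e1: "even (\<Sum>j\<in>I. F j (p j))" by (rule dvd_sum) (use ev in auto)
  have e2: "even (\<Sum>j\<in>I. F j (q j))" by (rule dvd_sum) (use ev in auto)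
  from e1 obtain A where A: "(\<Sum>j\<in>I. F j (p j)) = 2 * A" by (auto elim: evenE)
  from e2 obtain B where B: "(\<Sum>j\<in>I. F j (q j)) = 2 * B" by (auto elim: evenE)
  show ?thesis unfolding s A B by simp
qed

lemma pronic_add: "(u + v) * (u + v + 1) = u * (u + 1) + v * (v + 1) + 2 * (u * v :: nat)"
  by (simp add: algebra_simps)

lemma pronic_pred_add: "(u + v) * (u + v - 1) = u * (u - 1) + v * (v - 1) + 2 * (u * v :: nat)"
  by (cases u; cases v) (simp_all add: algebra_simps)

lemma even_pronic: "even (u * (u + 1 :: nat))" by simp
lemma even_pronic_pred: "even (u * (u - 1 :: nat))" by (cases u) simp_all

lemma R_exp_add: "R_exp (\<lambda>j. n j + m j) r = R_exp n r + R_exp m r + (\<Sum>j<r. n j * m j)"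
proof -
  define F where "F j u = (if even (r + j) then u * (u + 1) else u * (u - 1))" for j u :: nat
  have "R_exp (\<lambda>j. n j + m j) r = (\<Sum>j<r. F j (n j + m j)) div 2" unfolding R_exp_def F_def ..
  also have "\<dots> = (\<Sum>j<r. F j (n j)) div 2 + (\<Sum>j<r. F j (m j)) div 2 + (\<Sum>j<r. n j * m j)"
  proof (rule half_sum_quadratic_add)
    fix j u v show "F j (u + v) = F j u + F j v + 2 * (u * v)"
    proof (cases "even (r + j)")
      case True show ?thesis unfolding F_def if_P[OF True] by (rule pronic_add)
    next
      case False show ?thesis unfolding F_def if_not_P[OF False] by (rule pronic_pred_add)
    qed
  next
    fix j u show "even (F j u)" unfolding F_def using even_pronic even_pronic_pred by simp
  qed simp
  also have "(\<Sum>j<r. F j (n j)) div 2 = R_exp n r" unfolding R_exp_def F_def ..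
  also have "(\<Sum>j<r. F j (m j)) div 2 = R_exp m r" unfolding R_exp_def F_def ..
  finally show ?thesis .
qed

lemma N_exp_add:
  assumes "\<And>j. j \<le> d \<Longrightarrow> length (A j) = length (a j) + length (b j)"
  shows "N_exp A d = N_exp a d + N_exp b d + (\<Sum>j\<le>d. length (a j) * length (b j))"
proof -
  define F where "F j u = (if even j then u * (u - 1) else u * (u + 1))" for j u :: nat
  have "N_exp A d = (\<Sum>j\<le>d. F j (length (a j) + length (b j))) div 2"
    unfolding N_exp_def F_def Let_def using assms by (intro arg_cong[where f = "\<lambda>x. x div 2"] sum.cong) auto
  also have "\<dots> = (\<Sum>j\<le>d. F j (length (a j))) div 2 + (\<Sum>j\<le>d. F j (length (b j))) div 2 + (\<Sum>j\<le>d. length (a j) * length (b j))"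
  proof (rule half_sum_quadratic_add)
    fix j u v show "F j (u + v) = F j u + F j v + 2 * (u * v)"
    proof (cases "even j")
      case True show ?thesis unfolding F_def if_P[OF True] by (rule pronic_pred_add)
    next
      case False show ?thesis unfolding F_def if_not_P[OF False] by (rule pronic_add)
    qed
  next
    fix j u show "even (F j u)" unfolding F_def using even_pronic even_pronic_pred by simp
  qed simp
  also have "(\<Sum>j\<le>d. F j (length (a j))) div 2 = N_exp a d" unfolding N_exp_def F_def Let_def ..
  also have "(\<Sum>j\<le>d. F j (length (b j))) div 2 = N_exp b d" unfolding N_exp_def F_def Let_def ..
  finally show ?thesis .
qed

subsection \<open>Direct sums\<close>

lemma left_inverse_dim_le:
  fixes A B :: "'a::field mat"
  assumes A: "A \<in> carrier_mat p q" and B: "B \<in> carrier_mat q p" and BA: "B * A = 1\<^sub>m q"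
  shows "q \<le> p"
proof (rule ccontr)
  assume "\<not> q \<le> p"
  then obtain v where v: "v \<in> carrier_vec q" "v \<noteq> 0\<^sub>v q" "A *\<^sub>v v = 0\<^sub>v p"
    using wide_mat_kernel_nonzero[OF A] by auto
  have "v = (B * A) *\<^sub>v v" using BA v(1) by simp
  also have "\<dots> = B *\<^sub>v (A *\<^sub>v v)" by (rule assoc_mult_mat_vec[OF B A v(1)])
  also have "\<dots> = 0\<^sub>v q" using v(3) B by (simp add: mult_mat_vec_zero)
  finally show False using v(2) by simp
qed

lemma chirality_dim_sym:
  fixes G :: "nat \<Rightarrow> 'a::field mat"
  assumes G: "is_chirality n G d" and j: "j \<le> d"
  shows "n (d - j) = n j"
proof -
  have k: "d - j \<le> d" by simp
  have dk: "d - (d - j) = j" using j by simp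
  have c1: "G j \<in> carrier_mat (n (d - j)) (n j)" "G (d - j) * G j = 1\<^sub>m (n j)"
    using G j unfolding is_chirality_def by auto
  have c2: "G (d - j) \<in> carrier_mat (n j) (n (d - j))" "G j * G (d - j) = 1\<^sub>m (n (d - j))"
    using G k dk unfolding is_chirality_def by (metis (no_types, lifting))+
  show ?thesis using left_inverse_dim_le[OF c1(1) c2(1) c1(2)] left_inverse_dim_le[OF c2(1) c1(1) c2(2)] by simp
qed

lemma mult_block_diag_mat:
  fixes X U Y V :: "'a::semiring_0 mat"
  assumes "X \<in> carrier_mat k l" "U \<in> carrier_mat l p" "Y \<in> carrier_mat k' l'" "V \<in> carrier_mat l' p'"
  shows "four_block_mat X (0\<^sub>m k l') (0\<^sub>m k' l) Y * four_block_mat U (0\<^sub>m l p') (0\<^sub>m l' p) V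
    = four_block_mat (X * U) (0\<^sub>m k p') (0\<^sub>m k' p) (Y * V)"
  using assms by (subst mult_four_block_mat[of _ k l _ l' _ k' _ _ p _ p']) auto

lemma is_chirality_dsum:
  fixes G H :: "nat \<Rightarrow> 'a::field mat"
  assumes G: "is_chirality n G d" and H: "is_chirality m H d"
  shows "is_chirality (dsum_dim n m) (dsum_chir n m d G H) d"
  unfolding is_chirality_def
proof (intro allI impI conjI)
  fix j assume j: "j \<le> d"
  have dk: "d - (d - j) = j" using j by simp
  have Gj: "G j \<in> carrier_mat (n (d - j)) (n j)" "G (d - j) * G j = 1\<^sub>m (n j)"
    and Hj: "H j \<in> carrier_mat (m (d - j)) (m j)" "H (d - j) * H j = 1\<^sub>m (m j)"
    using G H j unfolding is_chirality_def by auto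
  have Gk: "G (d - j) \<in> carrier_mat (n j) (n (d - j))" and Hk: "H (d - j) \<in> carrier_mat (m j) (m (d - j))"
    using G H dk unfolding is_chirality_def by (metis diff_le_self)+
  show "dsum_chir n m d G H j \<in> carrier_mat (dsum_dim n m (d - j)) (dsum_dim n m j)"
    unfolding dsum_chir_def dsum_dim_def using Gj(1) Hj(1) by simp
  show "dsum_chir n m d G H (d - j) * dsum_chir n m d G H j = 1\<^sub>m (dsum_dim n m j)"
    unfolding dsum_chir_def dk dsum_dim_def using Gj Hj Gk Hk by (simp add: mult_block_diag_mat)
qed

lemma is_complex_dsum:
  fixes D E :: "nat \<Rightarrow> 'a::field mat"
  assumes D: "is_complex n D d" and E: "is_complex m E d"
  shows "is_complex (dsum_dim n m) (dsum_diff n m D E) d"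
  unfolding is_complex_def
proof (intro allI impI conjI)
  fix j assume j: "j < d"
  have "D j \<in> carrier_mat (n (Suc j)) (n j)" "E j \<in> carrier_mat (m (Suc j)) (m j)"
    using D E j unfolding is_complex_def by auto
  thus "dsum_diff n m D E j \<in> carrier_mat (dsum_dim n m (Suc j)) (dsum_dim n m j)"
    unfolding dsum_diff_def dsum_dim_def by simp
next
  fix j assume j: "Suc j < d"
  hence "D j \<in> carrier_mat (n (Suc j)) (n j)" "D (Suc j) \<in> carrier_mat (n (Suc (Suc j))) (n (Suc j))"
    "D (Suc j) * D j = 0\<^sub>m (n (Suc (Suc j))) (n j)"
    "E j \<in> carrier_mat (m (Suc j)) (m j)" "E (Suc j) \<in> carrier_mat (m (Suc (Suc j))) (m (Suc j))"
    "E (Suc j) * E j = 0\<^sub>m (m (Suc (Suc j))) (m j)"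
    using D E unfolding is_complex_def by auto
  thus "dsum_diff n m D E (Suc j) * dsum_diff n m D E j = 0\<^sub>m (dsum_dim n m (Suc (Suc j))) (dsum_dim n m j)"
    unfolding dsum_diff_def dsum_dim_def by (simp add: mult_block_diag_mat)
qed

lemma det_mat_of_cols_swap:
  fixes X Y Z :: "'a::field vec list"
  assumes lengths: "length (X @ Y @ Z) = N"
  shows "det (mat_of_cols N (X @ Y @ Z)) = (-1) ^ (length Y * length Z) * det (mat_of_cols N (X @ Z @ Y))"
proof -
  let ?A = "mat_of_cols N (X @ Y @ Z)"
  let ?l = "length X" and ?k = "length Y" and ?n = "length Z"
  have A: "?A \<in> carrier_mat N N" using lengths mat_of_cols_carrier(1)[of N "X @ Y @ Z"] by simp
  have N: "N = ?l + ?k + ?n" using lengths by simp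
  have "det ?A = (-1) ^ (?k * ?n) * det (mat N N (\<lambda>(i, j). ?A $$ (i, if j < ?l then j else if j < ?l + ?n then j + ?k else j - ?n)))"
    by (rule det_swap_final_cols[OF A N])
  also have "mat N N (\<lambda>(i, j). ?A $$ (i, if j < ?l then j else if j < ?l + ?n then j + ?k else j - ?n)) = mat_of_cols N (X @ Z @ Y)"
  proof (rule eq_matI)
    fix i j assume i: "i < dim_row (mat_of_cols N (X @ Z @ Y))" and j: "j < dim_col (mat_of_cols N (X @ Z @ Y))"
    hence i': "i < N" and j': "j < ?l + ?k + ?n" by auto
    have idx: "(if j < ?l then j else if j < ?l + ?n then j + ?k else j - ?n) < N" using j' N by auto
    have "mat N N (\<lambda>(i, j). ?A $$ (i, if j < ?l then j else if j < ?l + ?n then j + ?k else j - ?n)) $$ (i, j)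
        = (X @ Y @ Z) ! (if j < ?l then j else if j < ?l + ?n then j + ?k else j - ?n) $ i"
      using i' j' N idx by (simp add: mat_of_cols_index)
    also have "\<dots> = (X @ Z @ Y) ! j $ i"
      using j' by (auto simp: nth_append add.commute[of "length Z"])
    also have "\<dots> = mat_of_cols N (X @ Z @ Y) $$ (i, j)" using i' j' by (simp add: mat_of_cols_index)
    finally show "mat N N (\<lambda>(i, j). ?A $$ (i, if j < ?l then j else if j < ?l + ?n then j + ?k else j - ?n)) $$ (i, j)
        = mat_of_cols N (X @ Z @ Y) $$ (i, j)" .
  qed (use N in auto)
  finally show ?thesis .
qed

lemma det_mat_of_cols_regroup:
  fixes B1 B2 H1 H2 A1 A2 :: "'a::field vec list"
  assumes "length (B1 @ B2 @ H1 @ H2 @ A1 @ A2) = N"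
  shows "det (mat_of_cols N (B1 @ B2 @ H1 @ H2 @ A1 @ A2)) =
    (-1) ^ (length B2 * (length H1 + length H2 + length A1 + length A2)
      + length H2 * (length A1 + length A2 + length B2) + length A2 * (length B2 + length H2))
    * det (mat_of_cols N ((B1 @ H1 @ A1) @ (B2 @ H2 @ A2)))"
proof -
  have "det (mat_of_cols N (B1 @ B2 @ (H1 @ H2 @ A1 @ A2)))
      = (-1) ^ (length B2 * (length H1 + length H2 + length A1 + length A2))
        * det (mat_of_cols N ((B1 @ H1) @ H2 @ (A1 @ A2 @ B2)))"
    using det_mat_of_cols_swap[of B1 B2 "H1 @ H2 @ A1 @ A2" N] assms by (simp add: add.assoc)
  also have "det (mat_of_cols N ((B1 @ H1) @ H2 @ (A1 @ A2 @ B2)))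
      = (-1) ^ (length H2 * (length A1 + length A2 + length B2))
        * det (mat_of_cols N ((B1 @ H1 @ A1) @ A2 @ (B2 @ H2)))"
    using det_mat_of_cols_swap[of "B1 @ H1" H2 "A1 @ A2 @ B2" N] assms by (simp add: add.assoc)
  also have "det (mat_of_cols N ((B1 @ H1 @ A1) @ A2 @ (B2 @ H2)))
      = (-1) ^ (length A2 * (length B2 + length H2)) * det (mat_of_cols N ((B1 @ H1 @ A1) @ (B2 @ H2 @ A2)))"
    using det_mat_of_cols_swap[of "B1 @ H1 @ A1" A2 "B2 @ H2" N] assms by (simp add: add.assoc)
  finally show ?thesis by (simp add: power_add)
qed

definition inl_vec :: "nat \<Rightarrow> 'a::zero vec \<Rightarrow> 'a vec" where "inl_vec k x = x @\<^sub>v 0\<^sub>v k"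
definition inr_vec :: "nat \<Rightarrow> 'a::zero vec \<Rightarrow> 'a vec" where "inr_vec k y = 0\<^sub>v k @\<^sub>v y"

lemma inl_vec_carrier: "x \<in> carrier_vec p \<Longrightarrow> inl_vec q x \<in> carrier_vec (p + q)"
  unfolding inl_vec_def by auto

lemma inr_vec_carrier: "y \<in> carrier_vec q \<Longrightarrow> inr_vec p y \<in> carrier_vec (p + q)"
  unfolding inr_vec_def by auto

lemma det_mat_of_cols_inl_inr:
  fixes L1 L2 :: "'a::field vec list"
  assumes L1: "set L1 \<subseteq> carrier_vec p" "length L1 = p" and L2: "set L2 \<subseteq> carrier_vec q" "length L2 = q"
  shows "det (mat_of_cols (p + q) (map (inl_vec q) L1 @ map (inr_vec p) L2)) = det (mat_of_cols p L1) * det (mat_of_cols q L2)"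
proof -
  have "mat_of_cols (p + q) (map (inl_vec q) L1 @ map (inr_vec p) L2) =
    four_block_mat (mat_of_cols p L1) (0\<^sub>m p q) (0\<^sub>m q p) (mat_of_cols q L2)"
  proof (rule eq_matI)
    fix i j assume "i < dim_row (four_block_mat (mat_of_cols p L1) (0\<^sub>m p q) (0\<^sub>m q p) (mat_of_cols q L2))"
      "j < dim_col (four_block_mat (mat_of_cols p L1) (0\<^sub>m p q) (0\<^sub>m q p) (mat_of_cols q L2))"
    hence i: "i < p + q" and j: "j < p + q" using L1 L2 by auto
    show "mat_of_cols (p + q) (map (inl_vec q) L1 @ map (inr_vec p) L2) $$ (i, j) =
      four_block_mat (mat_of_cols p L1) (0\<^sub>m p q) (0\<^sub>m q p) (mat_of_cols q L2) $$ (i, j)"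
    proof (cases "j < p")
      case True
      have "L1 ! j \<in> carrier_vec p" using L1(1) nth_mem[of j L1] True L1(2) by auto
      hence dj: "dim_vec (L1 ! j) = p" by simp
      show ?thesis using i j True L1(2) L2(2) dj
        by (auto simp: mat_of_cols_index nth_append inl_vec_def)
    next
      case False
      have "L2 ! (j - p) \<in> carrier_vec q" using L2(1) nth_mem[of "j - p" L2] False j L2(2) by auto
      hence dj: "dim_vec (L2 ! (j - p)) = q" by simp
      show ?thesis using i j False L1(2) L2(2) dj
        by (auto simp: mat_of_cols_index nth_append inr_vec_def)
    qed
  qed (use L1 L2 in auto)
  also have "det \<dots> = det (mat_of_cols p L1) * det (mat_of_cols q L2)"
    by (rule det_four_block_mat_lower_left_zero) (use L1 L2 in auto)
  finally show ?thesis .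
qed

lemma alt_pow_sign_mult:
  fixes c1 c2 p1 p2 :: "'a::field"
  shows "alt_pow j (c1 * c2 / ((-1) ^ k * p1 * p2)) = (-1) ^ k * alt_pow j (c1 / p1) * alt_pow j (c2 / p2)"
proof -
  have sign: "inverse ((-1) ^ k :: 'a) = (-1) ^ k" by (cases "even k") auto
  have "c1 * c2 / ((-1) ^ k * p1 * p2) = (-1) ^ k * ((c1 / p1) * (c2 / p2))"
    by (simp add: divide_inverse inverse_mult_distrib sign)
  hence "alt_pow j (c1 * c2 / ((-1) ^ k * p1 * p2)) = alt_pow j ((-1) ^ k) * (alt_pow j (c1 / p1) * alt_pow j (c2 / p2))"
    by (simp only: alt_pow_mult)
  moreover have "alt_pow j ((-1) ^ k) = ((-1) ^ k :: 'a)" unfolding alt_pow_def using sign by simp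
  ultimately show ?thesis by (simp add: mult.assoc)
qed

locale phi_basis_dsum = C1: phi_basis n D d a eta + C2: phi_basis m E d a2 eta2
  for n :: "nat \<Rightarrow> nat" and D :: "nat \<Rightarrow> 'a::field mat" and d :: nat and a eta
    and m :: "nat \<Rightarrow> nat" and E :: "nat \<Rightarrow> 'a mat" and a2 eta2
begin

abbreviation "nn \<equiv> dsum_dim n m"
abbreviation "DD \<equiv> dsum_diff n m D E"

definition dsum_a :: "nat \<Rightarrow> 'a vec list" where
  "dsum_a j = map (inl_vec (m j)) (a j) @ map (inr_vec (n j)) (a2 j)"

definition dsum_eta :: "nat \<Rightarrow> 'a vec list" where
  "dsum_eta j = map (inl_vec (m j)) (eta j) @ map (inr_vec (n j)) (eta2 j)"

lemma dsum_diff_append: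
  assumes i: "i < d" and x: "x \<in> carrier_vec (n i)" and y: "y \<in> carrier_vec (m i)"
  shows "DD i *\<^sub>v (x @\<^sub>v y) = (D i *\<^sub>v x) @\<^sub>v (E i *\<^sub>v y)"
proof -
  have Di: "D i \<in> carrier_mat (n (Suc i)) (n i)" and Ei: "E i \<in> carrier_mat (m (Suc i)) (m i)"
    using C1.diff_carrier[OF i] C2.diff_carrier[OF i] .
  show ?thesis unfolding dsum_diff_def
    using four_block_mat_mult_vec[OF Di _ _ Ei x y] Di Ei x y by (simp add: zero_mult_mat_vec)
qed

lemma dsum_diff_inl:
  "i < d \<Longrightarrow> x \<in> carrier_vec (n i) \<Longrightarrow> DD i *\<^sub>v inl_vec (m i) x = inl_vec (m (Suc i)) (D i *\<^sub>v x)"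
  using dsum_diff_append mult_mat_vec_zero[OF C2.diff_carrier] by (simp add: inl_vec_def)

lemma dsum_diff_inr:
  "i < d \<Longrightarrow> y \<in> carrier_vec (m i) \<Longrightarrow> DD i *\<^sub>v inr_vec (n i) y = inr_vec (n (Suc i)) (E i *\<^sub>v y)"
  using dsum_diff_append mult_mat_vec_zero[OF C1.diff_carrier] by (simp add: inr_vec_def)

lemma inl_vec_cocyc:
  assumes "x \<in> cocyc n D d j" shows "inl_vec (m j) x \<in> cocyc nn DD d j"
proof -
  have x: "x \<in> carrier_vec (n j)" "j < d \<Longrightarrow> D j *\<^sub>v x = 0\<^sub>v (n (Suc j))"
    using assms unfolding C1.mem_cocyc_iff by auto
  have "DD j *\<^sub>v inl_vec (m j) x = 0\<^sub>v (nn (Suc j))" if "j < d"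
  proof -
    have "0\<^sub>v (n (Suc j)) @\<^sub>v 0\<^sub>v (m (Suc j)) = (0\<^sub>v (nn (Suc j)) :: 'a vec)" by (auto simp: dsum_dim_def)
    thus ?thesis using dsum_diff_inl[OF that x(1)] x(2)[OF that] by (simp add: inl_vec_def)
  qed
  moreover have "inl_vec (m j) x \<in> carrier_vec (nn j)" using inl_vec_carrier[OF x(1)] by (simp add: dsum_dim_def)
  ultimately show ?thesis unfolding cocyc_def by auto
qed

lemma inr_vec_cocyc:
  assumes "y \<in> cocyc m E d j" shows "inr_vec (n j) y \<in> cocyc nn DD d j"
proof -
  have y: "y \<in> carrier_vec (m j)" "j < d \<Longrightarrow> E j *\<^sub>v y = 0\<^sub>v (m (Suc j))"
    using assms unfolding C2.mem_cocyc_iff by auto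
  have "DD j *\<^sub>v inr_vec (n j) y = 0\<^sub>v (nn (Suc j))" if "j < d"
  proof -
    have "0\<^sub>v (n (Suc j)) @\<^sub>v 0\<^sub>v (m (Suc j)) = (0\<^sub>v (nn (Suc j)) :: 'a vec)" by (auto simp: dsum_dim_def)
    thus ?thesis using dsum_diff_inr[OF that y(1)] y(2)[OF that] by (simp add: inr_vec_def)
  qed
  moreover have "inr_vec (n j) y \<in> carrier_vec (nn j)"
    using inr_vec_carrier[OF y(1), of "n j"] by (simp add: dsum_dim_def)
  ultimately show ?thesis unfolding cocyc_def by auto
qed

lemma dprev_dsum_a:
  assumes j: "j \<le> d"
  shows "dprev DD dsum_a j = map (inl_vec (m j)) (C1.b j) @ map (inr_vec (n j)) (C2.b j)"
proof (cases j)
  case (Suc i)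
  hence i: "i < d" using j by simp
  have "map (\<lambda>v. DD i *\<^sub>v v) (map (inl_vec (m i)) (a i)) = map (inl_vec (m (Suc i))) (map (\<lambda>v. D i *\<^sub>v v) (a i))"
    "map (\<lambda>v. DD i *\<^sub>v v) (map (inr_vec (n i)) (a2 i)) = map (inr_vec (n (Suc i))) (map (\<lambda>v. E i *\<^sub>v v) (a2 i))"
    using dsum_diff_inl[OF i] dsum_diff_inr[OF i] C1.a_carrier[of i] C2.a_carrier[of i] i by auto
  thus ?thesis using Suc by (simp add: dprev_def dsum_a_def)
qed (simp add: dprev_def)

definition swap_exp :: "nat \<Rightarrow> nat" where
  "swap_exp j = length (C2.b j) * (length (eta j) + length (eta2 j) + length (a j) + length (a2 j))
     + length (eta2 j) * (length (a j) + length (a2 j) + length (C2.b j))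
     + length (a2 j) * (length (C2.b j) + length (eta2 j))"

lemma det_phi_mat_dsum:
  assumes j: "j \<le> d"
  shows "det (phi_mat nn DD dsum_a dsum_eta j) = (-1) ^ swap_exp j * det (C1.P j) * det (C2.P j)"
proof -
  let ?l = "map (inl_vec (m j))" and ?r = "map (inr_vec (n j))"
  let ?cols = "?l (C1.b j) @ ?r (C2.b j) @ ?l (eta j) @ ?r (eta2 j) @ ?l (a j) @ ?r (a2 j)"
  have len: "length ?cols = n j + m j" using C1.lengths[OF j] C2.lengths[OF j] by simp
  have "phi_mat nn DD dsum_a dsum_eta j = mat_of_cols (n j + m j) ?cols"
    unfolding phi_mat_def dprev_dsum_a[OF j] dsum_eta_def dsum_a_def dsum_dim_def by (simp only: append_assoc)
  moreover have "det (mat_of_cols (n j + m j) ?cols) = (-1) ^ swap_exp j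
      * det (mat_of_cols (n j + m j) (?l (C1.b j @ eta j @ a j) @ ?r (C2.b j @ eta2 j @ a2 j)))"
    using det_mat_of_cols_regroup[OF len] by (simp add: swap_exp_def)
  moreover have "det (mat_of_cols (n j + m j) (?l (C1.b j @ eta j @ a j) @ ?r (C2.b j @ eta2 j @ a2 j)))
      = det (C1.P j) * det (C2.P j)"
    unfolding phi_mat_def
    by (rule det_mat_of_cols_inl_inr[OF C1.cols_carrier[OF j] C1.cols_length[OF j] C2.cols_carrier[OF j] C2.cols_length[OF j]])
  ultimately show ?thesis by (simp only: mult.assoc)
qed

lemma phi_datum_dsum: "phi_datum nn DD d (dsum_a, dsum_eta)"
  unfolding phi_datum_def fst_conv snd_conv
proof (intro conjI allI impI)
  fix j assume j: "j \<le> d"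
  have "inl_vec (m j) x \<in> carrier_vec (nn j)" if "x \<in> set (a j)" for x
    using C1.a_carrier[OF j] that inl_vec_carrier[of x "n j" "m j"] by (auto simp: dsum_dim_def)
  moreover have "inr_vec (n j) y \<in> carrier_vec (nn j)" if "y \<in> set (a2 j)" for y
    using C2.a_carrier[OF j] that inr_vec_carrier[of y "m j" "n j"] by (auto simp: dsum_dim_def)
  ultimately show "set (dsum_a j) \<subseteq> carrier_vec (nn j)" by (auto simp: dsum_a_def)
  show "set (dsum_eta j) \<subseteq> cocyc nn DD d j"
    using C1.eta_cocyc[OF j] C2.eta_cocyc[OF j] inl_vec_cocyc inr_vec_cocyc by (auto simp: dsum_eta_def)
  show "length (dprev DD dsum_a j) + length (dsum_eta j) + length (dsum_a j) = nn j"
    unfolding dprev_dsum_a[OF j] dsum_eta_def dsum_a_def dsum_dim_def using C1.lengths[OF j] C2.lengths[OF j] by simp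
  show "det (phi_mat nn DD dsum_a dsum_eta j) \<noteq> 0"
    unfolding det_phi_mat_dsum[OF j] using C1.det_P_nonzero[OF j] C2.det_P_nonzero[OF j] by simp
next
  show "dsum_a d = []" unfolding dsum_a_def using C1.a_top C2.a_top by simp
qed

end

context cochain_complex
begin

lemma phi_basis_some:
  "phi_basis n D d (fst (SOME ae. phi_datum n D d ae)) (snd (SOME ae. phi_datum n D d ae))"
  using someI_ex[OF exists_phi_datum] complex
  by (simp add: phi_basis_def phi_basis_axioms_def cochain_complex_def)

lemma detH_eq_rho_rho_rep:
  assumes d: "d = 2 * r - 1" and ae: "phi_datum n D d ae"
  shows "detH_eq n D d (rho n D Gam r) (rho_rep n D Gam r ae)"
proof -
  let ?ae = "SOME ae. phi_datum n D d ae"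
  interpret phi_basis_pair n D d "fst ?ae" "snd ?ae" "fst ae" "snd ae"
    using phi_basis_some ae complex
    by (simp add: phi_basis_pair_def phi_basis_def phi_basis_axioms_def cochain_complex_def)
  show ?thesis using rho_rep_detH_eq[OF d, of Gam] unfolding rho_def d[symmetric] by simp
qed

end

lemma neg_one_power_eq_if_even_add: "even (a + b) \<Longrightarrow> ((-1) ^ a :: 'a::ring_1) = (-1) ^ b"
  by (cases "even a") auto

locale chiral_phi_basis_dsum = phi_basis_dsum +
  fixes G H :: "nat \<Rightarrow> 'a mat" and r :: nat
  assumes chir_G: "is_chirality n G d" and chir_H: "is_chirality m H d"
    and d_odd: "d = 2 * r - 1" and r_pos: "1 \<le> r"
begin

abbreviation "Gam \<equiv> dsum_chir n m d G H"

lemma det_c_mat_dsum: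
  assumes k: "k \<le> d"
  shows "det (c_mat nn Gam r k) = det (c_mat n G r k) * det (c_mat m H r k)"
proof (cases "k < r")
  case False
  let ?i = "d - k"
  have i: "2 * r - 1 - k = ?i" using d_odd by simp
  have dk: "d - ?i = k" using k by simp
  have Gi: "G ?i \<in> carrier_mat (n k) (n k)" and Hi: "H ?i \<in> carrier_mat (m k) (m k)"
    using chir_G chir_H k dk chirality_dim_sym[OF chir_G, of k] chirality_dim_sym[OF chir_H, of k]
    unfolding is_chirality_def by (metis diff_le_self)+
  have "c_mat nn Gam r k = four_block_mat (G ?i) (0\<^sub>m (n k) (m k)) (0\<^sub>m (m k) (n k)) (H ?i)"
    unfolding c_mat_def dsum_chir_def
    using False i dk chirality_dim_sym[OF chir_G, of k] chirality_dim_sym[OF chir_H, of k] k by simp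
  also have "det \<dots> = det (G ?i) * det (H ?i)"
    by (rule det_four_block_mat_lower_left_zero[OF Gi _ _ Hi]) auto
  finally show ?thesis unfolding c_mat_def using False i by simp
qed (simp add: c_mat_def)

lemma prod_alt_pow_dsum:
  "(\<Prod>j\<le>d. alt_pow j (det (c_mat nn Gam r j) / det (phi_mat nn DD dsum_a dsum_eta j)))
    = (-1) ^ (\<Sum>j\<le>d. swap_exp j)
      * (\<Prod>j\<le>d. alt_pow j (det (c_mat n G r j) / det (C1.P j)))
      * (\<Prod>j\<le>d. alt_pow j (det (c_mat m H r j) / det (C2.P j)))"
proof -
  have "(\<Prod>j\<le>d. alt_pow j (det (c_mat nn Gam r j) / det (phi_mat nn DD dsum_a dsum_eta j)))
      = (\<Prod>j\<le>d. (-1) ^ swap_exp j * alt_pow j (det (c_mat n G r j) / det (C1.P j))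
           * alt_pow j (det (c_mat m H r j) / det (C2.P j)))"
    using det_phi_mat_dsum det_c_mat_dsum alt_pow_sign_mult by (intro prod.cong) simp_all
  thus ?thesis by (simp add: prod.distrib power_sum)
qed

lemma even_dsum_exponent:
  "even ((\<Sum>j<r. n j * m j) + (\<Sum>j\<le>d. length (a j) * length (a2 j)) + (\<Sum>j\<le>d. swap_exp j)
    + (\<Sum>j\<le>d. \<Sum>k<j. length (eta j) * length (eta2 k)))"
proof -
  have "even ((\<Sum>j<r. n j * m j) + (\<Sum>j\<le>d. length (a j) * length (a2 j))
    + (\<Sum>j\<le>d. length (C2.b j) * (length (eta j) + length (eta2 j) + length (a j) + length (a2 j))
        + length (eta2 j) * (length (a j) + length (a2 j) + length (C2.b j))
        + length (a2 j) * (length (C2.b j) + length (eta2 j)))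
    + (\<Sum>j\<le>d. \<Sum>k<j. length (eta j) * length (eta2 k)))"
  proof (rule even_dsum_sign_exponent[where bx = "\<lambda>j. length (C1.b j)" and x = "\<lambda>j. length (a j)"
        and h = "\<lambda>j. length (eta j)"])
    show "length (C1.b 0) = 0" "length (C2.b 0) = 0"
      "\<And>j. length (C1.b (Suc j)) = length (a j)" "\<And>j. length (C2.b (Suc j)) = length (a2 j)"
      by (simp_all add: dprev_def)
    show "length (a d) = 0" using C1.a_top by simp
    show "d = 2 * r - 1" "1 \<le> r" using d_odd r_pos by simp_all
    show "\<And>j. j \<le> d \<Longrightarrow> n j = length (C1.b j) + length (eta j) + length (a j)"
      "\<And>j. j \<le> d \<Longrightarrow> m j = length (C2.b j) + length (eta2 j) + length (a2 j)"
      using C1.lengths C2.lengths by simp_all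
    show "\<And>j. j \<le> d \<Longrightarrow> n (d - j) = n j" "\<And>j. j \<le> d \<Longrightarrow> m (d - j) = m j"
      using chirality_dim_sym[OF chir_G] chirality_dim_sym[OF chir_H] by simp_all
  qed
  thus ?thesis unfolding swap_exp_def by (simp add: add.assoc)
qed

theorem rho_rep_dsum:
  "rho_rep nn DD Gam r (dsum_a, dsum_eta) = mu_H n m d (rho_rep n D G r (a, eta)) (rho_rep m E H r (a2, eta2))"
proof (rule prod_eqI)
  let ?Pi1 = "\<Prod>j\<le>d. alt_pow j (det (c_mat n G r j) / det (C1.P j))"
    and ?Pi2 = "\<Prod>j\<le>d. alt_pow j (det (c_mat m H r j) / det (C2.P j))"
    and ?S = "\<Sum>j\<le>d. \<Sum>k<j. length (eta j) * length (eta2 k)"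
  have R: "R_exp nn r = R_exp n r + R_exp m r + (\<Sum>j<r. n j * m j)"
    unfolding dsum_dim_def by (rule R_exp_add)
  have N: "N_exp dsum_a d = N_exp a d + N_exp a2 d + (\<Sum>j\<le>d. length (a j) * length (a2 j))"
    by (rule N_exp_add) (simp add: dsum_a_def)
  have sign: "((-1) ^ ((\<Sum>j<r. n j * m j) + (\<Sum>j\<le>d. length (a j) * length (a2 j)) + (\<Sum>j\<le>d. swap_exp j)) :: 'a)
      = (-1) ^ ?S"
    using even_dsum_exponent by (intro neg_one_power_eq_if_even_add) simp
  have "fst (rho_rep nn DD Gam r (dsum_a, dsum_eta))
      = (-1) ^ ((\<Sum>j<r. n j * m j) + (\<Sum>j\<le>d. length (a j) * length (a2 j)) + (\<Sum>j\<le>d. swap_exp j))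
        * ((-1) ^ (R_exp n r + N_exp a d) * ?Pi1) * ((-1) ^ (R_exp m r + N_exp a2 d) * ?Pi2)"
    unfolding rho_rep_def Let_def d_odd[symmetric] fst_conv snd_conv prod_alt_pow_dsum R N
    by (simp add: power_add algebra_simps)
  also have "\<dots> = fst (mu_H n m d (rho_rep n D G r (a, eta)) (rho_rep m E H r (a2, eta2)))"
    unfolding sign mu_H_def rho_rep_def Let_def d_odd[symmetric] fst_conv snd_conv ..
  finally show "fst (rho_rep nn DD Gam r (dsum_a, dsum_eta))
      = fst (mu_H n m d (rho_rep n D G r (a, eta)) (rho_rep m E H r (a2, eta2)))" .
  show "snd (rho_rep nn DD Gam r (dsum_a, dsum_eta))
      = snd (mu_H n m d (rho_rep n D G r (a, eta)) (rho_rep m E H r (a2, eta2)))"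
    unfolding rho_rep_def mu_H_def Let_def dsum_eta_def inl_vec_def inr_vec_def by simp
qed

end

theorem lemma4p4:
  fixes n m :: "nat \<Rightarrow> nat" and D E G H :: "nat \<Rightarrow> 'a::field_char_0 mat" and r :: nat
  assumes "r \<ge> 1"
    and "is_complex n D (2 * r - 1)" and "is_complex m E (2 * r - 1)"
    and "is_chirality n G (2 * r - 1)" and "is_chirality m H (2 * r - 1)"
  shows "is_chirality (dsum_dim n m) (dsum_chir n m (2 * r - 1) G H) (2 * r - 1) \<and>
         detH_eq (dsum_dim n m) (dsum_diff n m D E) (2 * r - 1)
           (rho (dsum_dim n m) (dsum_diff n m D E) (dsum_chir n m (2 * r - 1) G H) r)
           (mu_H n m (2 * r - 1) (rho n D G r) (rho m E H r))"
proof -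
  define d where "d = 2 * r - 1"
  let ?ae1 = "SOME ae. phi_datum n D d ae" and ?ae2 = "SOME ae. phi_datum m E d ae"
  have complexes: "cochain_complex n D d" "cochain_complex m E d"
    "cochain_complex (dsum_dim n m) (dsum_diff n m D E) d"
    using assms(2,3) is_complex_dsum[OF assms(2,3)] unfolding d_def cochain_complex_def by simp_all
  interpret S: chiral_phi_basis_dsum n D d "fst ?ae1" "snd ?ae1" m E "fst ?ae2" "snd ?ae2" G H r
    using cochain_complex.phi_basis_some[OF complexes(1)] cochain_complex.phi_basis_some[OF complexes(2)]
      assms unfolding chiral_phi_basis_dsum_def chiral_phi_basis_dsum_axioms_def phi_basis_dsum_def d_def
    by simp
  have "rho_rep (dsum_dim n m) (dsum_diff n m D E) S.Gam r (S.dsum_a, S.dsum_eta)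
      = mu_H n m d (rho n D G r) (rho m E H r)"
    using S.rho_rep_dsum unfolding rho_def d_def by simp
  moreover have "detH_eq (dsum_dim n m) (dsum_diff n m D E) d (rho (dsum_dim n m) (dsum_diff n m D E) S.Gam r)
      (rho_rep (dsum_dim n m) (dsum_diff n m D E) S.Gam r (S.dsum_a, S.dsum_eta))"
    by (rule cochain_complex.detH_eq_rho_rho_rep[OF complexes(3) d_def S.phi_datum_dsum])
  ultimately show ?thesis using is_chirality_dsum[OF assms(4,5)] unfolding d_def by simp
qed

end
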